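(* The category $\mathbb S^{\mathrm{m},\mathbb P}_r$ is a traced symmetric monoidal category.
   Context: Notation: $[k]=\{1,\dots,k\}$; $T(X)=X+\mathbb R\times X+\{\exists^*,\forall^*\}$; diagrammatic composition. $\mathbb S^{\mathrm{m},\mathbb P}_r$ (meager semantic category for plays) has natural numbers as objects; an arrow $f:m\to n$ is a function $f:[m]\to T([n])$ satisfying realizability: for all $i\ne j$ in $[m]$, $f(i)\notin[n]$ or $f(j)\notin\{f(i)\}\cup\mathbb R\times\{f(i)\}$. Its hom-sets are ordered pointwise by the least order $\le$ on $T([n])$ with $(r_1,i)\le(r_2,i)$ whenever $r_1\ge r_2$, $\exists^*\le z$ and $z\le\forall^*$ for all $z$. Its operations are: composition of $f:m\to l$, $g:l\to n$: $(f;g)(i)=f(i)$ if $f(i)\in\{\exists^*,\forall^*\}$; $g(j)$ if $f(i)=j\in[l]$; $g(j)$ if $f(i)=(r,j)$ and $g(j)\in\{\exists^*,\forall^*\}$; $(r,k)$ if $f(i)=(r,j)$, $g(j)=k$; $(r+r',k)$ if $f(i)=(r,j)$, $g(j)=(r',k)$. $\mathrm{id}(i)=i$; $\sigma_{m,n}(i)=n+i$ ($i\le m$), $\sigma_{m,n}(m+j)=j$; $(f\oplus g)(i)=f(i)$ ($i\le m$), $(f\oplus g)(m+i)$ is $g(i)$ with its index $j$ (if any) shifted to $n+j$ (for $f:m\to n$). Trace of $f:l+m\to l+n$ at $i\in[m]$: $v_0=l+i$; if $j=0$ or $v_j\in[l]$ then $v_{j+1}=f(v_j)$; if $v_j=(r,k)$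 with $k\in[l]$ then $v_{j+1}=f(k)$; otherwise stop at $v_j$. If finite $(v_0,..,v_K)$ and $S$ is the sum of first components of $v_j\in\mathbb R\times[l+n]$, $1\le j\le K$: value $v_K$ if $v_K\in\{\exists^*,\forall^*\}$; $k$ if $v_K=l+k$ and $v_j\in[l]$ for $1\le j<K$; $(S,k)$ if $v_K=l+k$ and some earlier $v_j\in\mathbb R\times[l]$; $(S,k)$ if $v_K=(r,l+k)$. If infinite, with $w'_1,w'_2,..$ the first components of the (infinitely many) entries in $\mathbb R\times[l]$: $\exists^*$ if $\liminf_N\frac1N\sum_{t\le N}w'_t\ge0$, else $\forall^*$. *)

theory Defs
  imports Complex_Main "HOL-Library.FuncSet" "HOL-Library.Infinite_Set"
    "HOL-Library.Extended_Real" "HOL-Library.Liminf_Limsup"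
begin

section \<open>The set T(X) = X + R x X + {exists*, forall*}, with X = {1..n}\<close>

datatype tval = Idx nat | Wt real nat | ExS | AllS

fun inT :: "nat \<Rightarrow> tval \<Rightarrow> bool" where
  "inT n (Idx k) = (k \<in> {1..n})"
| "inT n (Wt r k) = (k \<in> {1..n})"
| "inT n ExS = True"
| "inT n AllS = True"

text \<open>Arrows m -> n: functions [m] -> T([n]) (extensional: undefined outside [m])
  satisfying realizability.\<close>
definition arr :: "nat \<Rightarrow> nat \<Rightarrow> (nat \<Rightarrow> tval) \<Rightarrow> bool" where
  "arr m n f \<longleftrightarrow>
     (\<forall>i\<in>{1..m}. inT n (f i)) \<and>
     (\<forall>i\<in>{1..m}. \<forall>j\<in>{1..m}. i \<noteq> j \<longrightarrow>
        (case f i of Idx k \<Rightarrow> f j \<noteq> Idx k \<and> (\<forall>r. f j \<noteq> Wt r k) | _ \<Rightarrow> True)) \<and>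
     f \<in> extensional {1..m}"

text \<open>Composition (diagrammatic) of f : m -> l and g : l -> n.\<close>
definition comp :: "nat \<Rightarrow> nat \<Rightarrow> nat \<Rightarrow> (nat \<Rightarrow> tval) \<Rightarrow> (nat \<Rightarrow> tval) \<Rightarrow> (nat \<Rightarrow> tval)" where
  "comp m l n f g = restrict (\<lambda>i. case f i of
       ExS \<Rightarrow> ExS
     | AllS \<Rightarrow> AllS
     | Idx j \<Rightarrow> g j
     | Wt r j \<Rightarrow> (case g j of ExS \<Rightarrow> ExS | AllS \<Rightarrow> AllS
                   | Idx k \<Rightarrow> Wt r k | Wt r' k \<Rightarrow> Wt (r + r') k)) {1..m}"

definition ident :: "nat \<Rightarrow> (nat \<Rightarrow> tval)" where
  "ident m = restrict Idx {1..m}"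

definition sym :: "nat \<Rightarrow> nat \<Rightarrow> (nat \<Rightarrow> tval)" where
  "sym m n = restrict (\<lambda>i. if i \<le> m then Idx (n + i) else Idx (i - m)) {1..m+n}"

fun shift :: "nat \<Rightarrow> tval \<Rightarrow> tval" where
  "shift n (Idx j) = Idx (n + j)"
| "shift n (Wt r j) = Wt r (n + j)"
| "shift n ExS = ExS"
| "shift n AllS = AllS"

definition tensor :: "nat \<Rightarrow> nat \<Rightarrow> nat \<Rightarrow> nat \<Rightarrow> (nat \<Rightarrow> tval) \<Rightarrow> (nat \<Rightarrow> tval) \<Rightarrow> (nat \<Rightarrow> tval)" where
  "tensor m n m' n' f g = restrict (\<lambda>i. if i \<le> m then f i else shift n (g (i - m))) {1..m+m'}"

fun cont :: "nat \<Rightarrow> tval \<Rightarrow> bool" where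
  "cont l (Idx k) = (k \<in> {1..l})"
| "cont l (Wt r k) = (k \<in> {1..l})"
| "cont l ExS = False"
| "cont l AllS = False"

fun idx :: "tval \<Rightarrow> nat" where
  "idx (Idx k) = k"
| "idx (Wt r k) = k"
| "idx ExS = 0"
| "idx AllS = 0"

fun is_wt :: "tval \<Rightarrow> bool" where
  "is_wt (Wt r k) = True"
| "is_wt _ = False"

fun wt :: "tval \<Rightarrow> real" where
  "wt (Wt r k) = r"
| "wt _ = 0"

primrec walk :: "nat \<Rightarrow> (nat \<Rightarrow> tval) \<Rightarrow> nat \<Rightarrow> nat \<Rightarrow> tval" where
  "walk l f i 0 = Idx (l + i)"
| "walk l f i (Suc j) =
     (if j = 0 \<or> cont l (walk l f i j) then f (idx (walk l f i j)) else walk l f i j)"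

definition walk_finite :: "nat \<Rightarrow> (nat \<Rightarrow> tval) \<Rightarrow> nat \<Rightarrow> bool" where
  "walk_finite l f i \<longleftrightarrow> (\<exists>K\<ge>1. \<not> cont l (walk l f i K))"

definition walk_end :: "nat \<Rightarrow> (nat \<Rightarrow> tval) \<Rightarrow> nat \<Rightarrow> nat" where
  "walk_end l f i = (LEAST K. K \<ge> 1 \<and> \<not> cont l (walk l f i K))"

definition trace_val :: "nat \<Rightarrow> nat \<Rightarrow> (nat \<Rightarrow> tval) \<Rightarrow> nat \<Rightarrow> tval" where
  "trace_val l n f i =
    (if walk_finite l f i then
       (let K = walk_end l f i;
            v = walk l f i;
            S = (\<Sum>j\<in>{1..K}. (case v j of Wt r k \<Rightarrow> if k \<in> {1..l+n} then r else 0 | _ \<Rightarrow> 0))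
        in case v K of
             ExS \<Rightarrow> ExS
           | AllS \<Rightarrow> AllS
           | Idx p \<Rightarrow> (if \<forall>j\<in>{1..<K}. \<exists>q. v j = Idx q then Idx (p - l) else Wt S (p - l))
           | Wt r p \<Rightarrow> Wt S (p - l))
     else
       (let v = walk l f i;
            J = {j. j \<ge> 1 \<and> is_wt (v j) \<and> idx (v j) \<in> {1..l}};
            w = (\<lambda>t. wt (v (enumerate J t)))
        in if liminf (\<lambda>N. ereal ((\<Sum>t<Suc N. w t) / real (Suc N))) \<ge> 0 then ExS else AllS))"

definition tr :: "nat \<Rightarrow> nat \<Rightarrow> nat \<Rightarrow> (nat \<Rightarrow> tval) \<Rightarrow> (nat \<Rightarrow> tval)" where
  "tr l m n f = restrict (trace_val l n f) {1..m}"

text \<open>Operations carry their object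
  parameters: cmp a b c f g (f:a->b, g:b->c, diagrammatic), idn a,
  tns a b c d f g (f:a->b, g:c->d), sy a b : a+b -> b+a,
  trc l a b f : a -> b for f : l+a -> l+b (trace over the left summand).
  Associators and unitors are identities since (a+b)+c = a+(b+c), 0+a = a = a+0.\<close>

definition is_category where
  "is_category arrow cmp idn \<longleftrightarrow>
    (\<forall>a b c f g. arrow a b f \<longrightarrow> arrow b c g \<longrightarrow> arrow a c (cmp a b c f g)) \<and>
    (\<forall>a. arrow a a (idn a)) \<and>
    (\<forall>a b f. arrow a b f \<longrightarrow> cmp a a b (idn a) f = f \<and> cmp a b b f (idn b) = f) \<and>
    (\<forall>a b c d f g h. arrow a b f \<longrightarrow> arrow b c g \<longrightarrow> arrow c d h \<longrightarrow>
        cmp a c d (cmp a b c f g) h = cmp a b d f (cmp b c d g h))"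

definition is_strict_monoidal where
  "is_strict_monoidal arrow cmp idn tns \<longleftrightarrow>
    is_category arrow cmp idn \<and>
    (\<forall>a b c d f g. arrow a b f \<longrightarrow> arrow c d g \<longrightarrow> arrow (a+c) (b+d) (tns a b c d f g)) \<and>
    (\<forall>a c. tns a a c c (idn a) (idn c) = idn (a+c)) \<and>
    (\<forall>a b e c d h f f' g g'. arrow a b f \<longrightarrow> arrow b e f' \<longrightarrow> arrow c d g \<longrightarrow> arrow d h g' \<longrightarrow>
        cmp (a+c) (b+d) (e+h) (tns a b c d f g) (tns b e d h f' g')
          = tns a e c h (cmp a b e f f') (cmp c d h g g')) \<and>
    (\<forall>a b c d e h f g k. arrow a b f \<longrightarrow> arrow c d g \<longrightarrow> arrow e h k \<longrightarrow>
        tns (a+c) (b+d) e h (tns a b c d f g) k = tns a b (c+e) (d+h) f (tns c d e h g k)) \<and>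
    (\<forall>a b f. arrow a b f \<longrightarrow> tns 0 0 a b (idn 0) f = f \<and> tns a b 0 0 f (idn 0) = f)"

definition is_symmetric_monoidal where
  "is_symmetric_monoidal arrow cmp idn tns sy \<longleftrightarrow>
    is_strict_monoidal arrow cmp idn tns \<and>
    (\<forall>a b. arrow (a+b) (b+a) (sy a b)) \<and>
    (\<forall>a b. cmp (a+b) (b+a) (a+b) (sy a b) (sy b a) = idn (a+b)) \<and>
    (\<forall>a b c d f g. arrow a b f \<longrightarrow> arrow c d g \<longrightarrow>
        cmp (a+c) (b+d) (d+b) (tns a b c d f g) (sy b d)
          = cmp (a+c) (c+a) (d+b) (sy a c) (tns c d a b g f)) \<and>
    (\<forall>a b c. sy a (b+c) =
        cmp (a+b+c) (b+a+c) (b+c+a) (tns (a+b) (b+a) c c (sy a b) (idn c))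
                                    (tns b b (a+c) (c+a) (idn b) (sy a c)))"

definition is_traced_symmetric_monoidal where
  "is_traced_symmetric_monoidal arrow cmp idn tns sy trc \<longleftrightarrow>
    is_symmetric_monoidal arrow cmp idn tns sy \<and>
    \<comment> \<open>well-definedness\<close>
    (\<forall>l a b f. arrow (l+a) (l+b) f \<longrightarrow> arrow a b (trc l a b f)) \<and>
    \<comment> \<open>tightening (naturality in a and b)\<close>
    (\<forall>l a a' b b' g f h. arrow a' a g \<longrightarrow> arrow (l+a) (l+b) f \<longrightarrow> arrow b b' h \<longrightarrow>
        trc l a' b' (cmp (l+a') (l+b) (l+b')
                       (cmp (l+a') (l+a) (l+b) (tns l l a' a (idn l) g) f)
                       (tns l l b b' (idn l) h))
          = cmp a' b b' (cmp a' a b g (trc l a b f)) h) \<and>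
    \<comment> \<open>sliding (dinaturality)\<close>
    (\<forall>l l' a b f k. arrow (l+a) (l'+b) f \<longrightarrow> arrow l' l k \<longrightarrow>
        trc l a b (cmp (l+a) (l'+b) (l+b) f (tns l' l b b k (idn b)))
          = trc l' a b (cmp (l'+a) (l+a) (l'+b) (tns l' l a a k (idn a)) f)) \<and>
    \<comment> \<open>vanishing\<close>
    (\<forall>a b f. arrow a b f \<longrightarrow> trc 0 a b f = f) \<and>
    (\<forall>l l' a b f. arrow (l+l'+a) (l+l'+b) f \<longrightarrow>
        trc (l+l') a b f = trc l' a b (trc l (l'+a) (l'+b) f)) \<and>
    \<comment> \<open>superposing\<close>
    (\<forall>l a b c d f g. arrow (l+a) (l+b) f \<longrightarrow> arrow c d g \<longrightarrow>
        trc l (a+c) (b+d) (tns (l+a) (l+b) c d f g) = tns a b c d (trc l a b f) g) \<and>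
    \<comment> \<open>yanking\<close>
    (\<forall>l. trc l l l (sy l l) = idn l)"

end

theory Submission
  imports Defs
begin

text \<open>
  Composition, tensor and symmetry act pointwise on the values \<open>f i \<in> T([n])\<close>, so the
  symmetric monoidal laws are direct computations.

  The trace of \<open>f : l + m \<rightarrow> l + n\<close> at \<open>i\<close> follows the orbit \<open>f (l+i), f (idx (f (l+i))), \<dots>\<close>
  while it stays in the loop \<open>[l]\<close>. If it leaves the loop, the trace is the composite of the
  values met. If it never does, it is eventually periodic, since \<open>[l]\<close> is finite; then the
  \<open>liminf\<close> of the mean weights is nonnegative iff the weight of a period is, iff the partial
  weight sums are bounded below. Realizability guarantees that the period carries weights at all,
  and that an unweighted chain can be followed backwards uniquely, which gives realizability of
  the trace. Boundedness from below, unlike the mean along the subsequence of weighted steps,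
  is insensitive to the regroupings of orbits that the trace axioms need: sliding interleaves the
  orbits of \<open>f ; k\<close> and \<open>k ; f\<close>, and vanishing cuts the orbit for the loop \<open>[l + l']\<close> into blocks,
  one for each step of the orbit for \<open>[l']\<close> under the inner trace.
\<close>

fun has_idx :: "tval \<Rightarrow> bool" where
  "has_idx (Idx k) = True"
| "has_idx (Wt r k) = True"
| "has_idx ExS = False"
| "has_idx AllS = False"

definition vcomp :: "tval \<Rightarrow> tval \<Rightarrow> tval" where
  "vcomp x y = (case x of ExS \<Rightarrow> ExS | AllS \<Rightarrow> AllS | Idx j \<Rightarrow> y
    | Wt r j \<Rightarrow> (case y of ExS \<Rightarrow> ExS | AllS \<Rightarrow> AllS | Idx k \<Rightarrow> Wt r k | Wt r' k \<Rightarrow> Wt (r + r') k))"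

lemma vcomp_simps [simp]:
  "vcomp ExS y = ExS" "vcomp AllS y = AllS" "vcomp (Idx j) y = y"
  "vcomp (Wt r j) ExS = ExS" "vcomp (Wt r j) AllS = AllS"
  "vcomp (Wt r j) (Idx k) = Wt r k" "vcomp (Wt r j) (Wt r' k) = Wt (r + r') k"
  by (simp_all add: vcomp_def)

lemma vcomp_assoc: "vcomp (vcomp x y) z = vcomp x (vcomp y z)"
  by (cases x; cases y; cases z) (simp_all add: add.assoc)

lemma has_idx_vcomp: "has_idx x \<Longrightarrow> has_idx (vcomp x y) = has_idx y"
  by (cases x; cases y) auto

lemma has_idx_vcompD: "has_idx (vcomp x y) \<Longrightarrow> has_idx x \<and> has_idx y"
  by (cases x; cases y) auto

lemma idx_vcomp: "has_idx x \<Longrightarrow> idx (vcomp x y) = idx y"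
  by (cases x; cases y) auto

lemma cont_vcomp: "has_idx x \<Longrightarrow> cont l (vcomp x y) = cont l y"
  by (cases x; cases y) auto

lemma wt_vcomp: "has_idx x \<Longrightarrow> has_idx y \<Longrightarrow> wt (vcomp x y) = wt x + wt y"
  by (cases x; cases y) auto

lemma vcomp_ExS: "has_idx x \<Longrightarrow> vcomp x ExS = ExS"
  by (cases x) auto

lemma vcomp_AllS: "has_idx x \<Longrightarrow> vcomp x AllS = AllS"
  by (cases x) auto

lemma vcomp_Idx_idx: "has_idx x \<Longrightarrow> vcomp x (Idx (idx x)) = x"
  by (cases x) auto

lemma vcomp_eq_IdxD: "vcomp x y = Idx k \<Longrightarrow> x = Idx (idx x) \<and> y = Idx k"
  by (cases x; cases y) auto

lemma cont_has_idx: "cont l x \<Longrightarrow> has_idx x"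
  by (cases x) auto

lemma cont_idx: "cont l x \<Longrightarrow> idx x \<in> {1..l}"
  by (cases x) auto

lemma cont_add: "cont l x \<Longrightarrow> cont (l + l') x"
  by (cases x) auto

lemma cont_iff: "has_idx x \<Longrightarrow> cont l x \<longleftrightarrow> idx x \<in> {1..l}"
  by (cases x) auto

lemma inT_iff: "inT n x \<longleftrightarrow> (has_idx x \<longrightarrow> idx x \<in> {1..n})"
  by (cases x) auto

lemma inT_vcomp: "inT n y \<Longrightarrow> inT n (vcomp x y)"
  by (cases x; cases y) auto

lemma inT_not_cont_idx: "inT n x \<Longrightarrow> has_idx x \<Longrightarrow> \<not> cont l x \<Longrightarrow> l < idx x"
  by (cases x) auto

lemma comp_apply: "i \<in> {1..m} \<Longrightarrow> comp m l n f g i = vcomp (f i) (g (idx (f i)))"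
  unfolding comp_def by (auto simp: vcomp_def split: tval.split)

lemma comp_extensional: "comp m l n f g \<in> extensional {1..m}"
  unfolding comp_def by simp

fun unshift :: "nat \<Rightarrow> tval \<Rightarrow> tval" where
  "unshift l (Idx p) = Idx (p - l)"
| "unshift l (Wt r p) = Wt r (p - l)"
| "unshift l ExS = ExS"
| "unshift l AllS = AllS"

lemma has_idx_shift [simp]: "has_idx (shift n x) = has_idx x"
  by (cases x) auto

lemma has_idx_unshift [simp]: "has_idx (unshift n x) = has_idx x"
  by (cases x) auto

lemma wt_unshift [simp]: "wt (unshift n x) = wt x"
  by (cases x) auto

lemma shift_0 [simp]: "shift 0 x = x"
  by (cases x) auto

lemma unshift_0 [simp]: "unshift 0 x = x"
  by (cases x) auto

lemma idx_shift: "has_idx x \<Longrightarrow> idx (shift n x) = n + idx x"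
  by (cases x) auto

lemma idx_unshift: "has_idx x \<Longrightarrow> idx (unshift n x) = idx x - n"
  by (cases x) auto

lemma shift_shift: "shift m (shift n x) = shift (m + n) x"
  by (cases x) auto

lemma unshift_add: "unshift (m + n) x = unshift n (unshift m x)"
  by (cases x) auto

lemma unshift_shift_add: "unshift m (shift (m + n) x) = shift n x"
  by (cases x) auto

lemma vcomp_shift: "vcomp (shift n x) y = vcomp x y"
  by (cases x; cases y) auto

lemma shift_vcomp: "shift n (vcomp x y) = vcomp x (shift n y)"
  by (cases x; cases y) auto

lemma unshift_vcomp: "has_idx x \<Longrightarrow> unshift n (vcomp x y) = vcomp x (unshift n y)"
  by (cases x; cases y) auto

lemma vcomp_Idx_shift: "has_idx x \<Longrightarrow> vcomp x (Idx (n + idx x)) = shift n x"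
  by (cases x) auto

lemma shift_unshift: "inT (l + n) x \<Longrightarrow> \<not> cont l x \<Longrightarrow> shift l (unshift l x) = x"
  by (cases x) auto

lemma not_cont_0: "\<not> cont 0 x"
  by (cases x) auto

lemma unshift_shift [simp]: "unshift l (shift l x) = x"
  by (cases x) auto

lemma wt_shift [simp]: "wt (shift n x) = wt x"
  by (cases x) auto

lemma inT_shift: "inT n x \<Longrightarrow> inT (m + n) (shift m x)"
  by (cases x) auto

lemma inT_unshift: "inT (l + n) x \<Longrightarrow> \<not> cont l x \<Longrightarrow> inT n (unshift l x)"
  by (cases x) auto

lemma inT_mono: "inT n x \<Longrightarrow> n \<le> n' \<Longrightarrow> inT n' x"
  by (cases x) auto

lemma not_cont_shift: "inT n x \<Longrightarrow> \<not> cont l (shift (l + m) x)"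
  by (cases x) auto

section \<open>Orbits and their resolution\<close>

primrec orbit :: "(nat \<Rightarrow> tval) \<Rightarrow> tval \<Rightarrow> nat \<Rightarrow> tval" where
  "orbit F x 0 = x"
| "orbit F x (Suc t) = F (idx (orbit F x t))"

lemma orbit_Suc': "orbit F x (Suc t) = orbit F (F (idx x)) t"
  by (induction t) auto

lemma orbit_add: "orbit F x (m + t) = orbit F (orbit F x m) t"
  by (induction t) auto

definition exits :: "nat \<Rightarrow> (nat \<Rightarrow> tval) \<Rightarrow> tval \<Rightarrow> bool" where
  "exits l F x \<longleftrightarrow> (\<exists>t. \<not> cont l (orbit F x t))"

definition exit_time :: "nat \<Rightarrow> (nat \<Rightarrow> tval) \<Rightarrow> tval \<Rightarrow> nat" where
  "exit_time l F x = (LEAST t. \<not> cont l (orbit F x t))"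

fun vcomp_upto :: "(nat \<Rightarrow> tval) \<Rightarrow> nat \<Rightarrow> tval" where
  "vcomp_upto p 0 = p 0"
| "vcomp_upto p (Suc K) = vcomp (p 0) (vcomp_upto (\<lambda>j. p (Suc j)) K)"

definition orbit_weight :: "(nat \<Rightarrow> tval) \<Rightarrow> tval \<Rightarrow> nat \<Rightarrow> real" where
  "orbit_weight F x N = (\<Sum>t<N. wt (orbit F x t))"

definition weight_bdd_below :: "(nat \<Rightarrow> tval) \<Rightarrow> tval \<Rightarrow> bool" where
  "weight_bdd_below F x \<longleftrightarrow> (\<exists>B. \<forall>N. B \<le> orbit_weight F x N)"

text \<open>The trace value before unshifting. For an orbit that never exits, the paper's
  criterion on the \<open>liminf\<close> of mean weights is replaced by boundedness from below of the
  partial weight sums; \<open>trace_val_if_not_exits\<close> shows that the two agree.\<close>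
definition resolve :: "nat \<Rightarrow> (nat \<Rightarrow> tval) \<Rightarrow> tval \<Rightarrow> tval" where
  "resolve l F x =
    (if exits l F x then vcomp_upto (orbit F x) (exit_time l F x)
     else if weight_bdd_below F x then ExS else AllS)"

lemma not_cont_exit_time: "exits l F x \<Longrightarrow> \<not> cont l (orbit F x (exit_time l F x))"
  unfolding exits_def exit_time_def by (metis LeastI)

lemma cont_before_exit_time: "t < exit_time l F x \<Longrightarrow> cont l (orbit F x t)"
  unfolding exit_time_def using not_less_Least by blast

lemma cont_orbit_if_not_exits: "\<not> exits l F x \<Longrightarrow> cont l (orbit F x t)"
  unfolding exits_def by auto

lemma exits_step: "cont l x \<Longrightarrow> exits l F x = exits l F (F (idx x))"
  unfolding exits_def by (metis not0_implies_Suc orbit.simps(1) orbit_Suc')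

lemma exit_time_step:
  assumes c: "cont l x" and e: "exits l F x"
  shows "exit_time l F x = Suc (exit_time l F (F (idx x)))"
proof -
  have e': "exits l F (F (idx x))" using exits_step[OF c] e by simp
  have "exit_time l F x \<noteq> 0" using not_cont_exit_time[OF e] c by (metis orbit.simps(1))
  then obtain k where k: "exit_time l F x = Suc k" using not0_implies_Suc by blast
  have "\<not> cont l (orbit F (F (idx x)) k)" using not_cont_exit_time[OF e] k orbit_Suc' by metis
  hence "exit_time l F (F (idx x)) \<le> k" unfolding exit_time_def by (simp add: Least_le)
  moreover have "\<not> cont l (orbit F x (Suc (exit_time l F (F (idx x)))))"
    using not_cont_exit_time[OF e'] orbit_Suc' by metis
  hence "exit_time l F x \<le> Suc (exit_time l F (F (idx x)))"
    unfolding exit_time_def by (simp add: Least_le)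
  ultimately show ?thesis using k by simp
qed

lemma orbit_weight_0 [simp]: "orbit_weight F x 0 = 0"
  unfolding orbit_weight_def by simp

lemma orbit_weight_Suc: "orbit_weight F x (Suc N) = wt x + orbit_weight F (F (idx x)) N"
  unfolding orbit_weight_def sum.lessThan_Suc_shift orbit_Suc' by simp

lemma orbit_weight_add:
  "orbit_weight F x (m + n) = orbit_weight F x m + orbit_weight F (orbit F x m) n"
  unfolding orbit_weight_def by (induction n) (simp_all add: orbit_add)

lemma bdd_below_Suc_iff:
  fixes A G :: "nat \<Rightarrow> real"
  assumes "\<And>N. A (Suc N) = c + G N" "A 0 = 0"
  shows "(\<exists>B. \<forall>N. B \<le> A N) \<longleftrightarrow> (\<exists>B. \<forall>N. B \<le> G N)"
proof
  assume "\<exists>B. \<forall>N. B \<le> A N"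
  then obtain B where "\<And>N. B \<le> A N" by auto
  hence "B - c \<le> G N" for N using assms(1)[of N] by (metis diff_le_eq add.commute)
  thus "\<exists>B. \<forall>N. B \<le> G N" by auto
next
  assume "\<exists>B. \<forall>N. B \<le> G N"
  then obtain B where B: "\<And>N. B \<le> G N" by auto
  have "min 0 (B + c) \<le> A N" for N
    using B[of "N - 1"] assms(1)[of "N - 1"] assms(2) by (cases N) auto
  thus "\<exists>B. \<forall>N. B \<le> A N" by blast
qed

lemma weight_bdd_below_step: "weight_bdd_below F x = weight_bdd_below F (F (idx x))"
  unfolding weight_bdd_below_def by (rule bdd_below_Suc_iff[where c = "wt x"]) (simp_all add: orbit_weight_Suc)

lemma resolve_exit: "\<not> cont l x \<Longrightarrow> resolve l F x = x"
proof -
  assume x: "\<not> cont l x"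
  hence "exits l F x" unfolding exits_def by (metis orbit.simps(1))
  moreover have "exit_time l F x = 0"
    unfolding exit_time_def using x by (metis (mono_tags, lifting) Least_eq_0 orbit.simps(1))
  ultimately show ?thesis unfolding resolve_def by simp
qed

lemma resolve_step: "cont l x \<Longrightarrow> resolve l F x = vcomp x (resolve l F (F (idx x)))"
proof (cases "exits l F x")
  case True
  assume c: "cont l x"
  have "vcomp_upto (orbit F x) (Suc K) = vcomp x (vcomp_upto (orbit F (F (idx x))) K)" for K
    by (simp add: orbit_Suc' del: orbit.simps(2))
  then show ?thesis
    using True exits_step[OF c] exit_time_step[OF c True] unfolding resolve_def by simp
next
  case False
  assume c: "cont l x"
  then show ?thesis using False exits_step[OF c] weight_bdd_below_step[of F x] cont_has_idx[OF c]
    unfolding resolve_def by (simp add: vcomp_ExS vcomp_AllS)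
qed

lemma resolve_diverge:
  "\<not> exits l F x \<Longrightarrow> resolve l F x = (if weight_bdd_below F x then ExS else AllS)"
  unfolding resolve_def by simp

lemma resolve_induct [case_names exit step diverge]:
  assumes exit: "\<And>x. \<not> cont l x \<Longrightarrow> P x"
    and step: "\<And>x. cont l x \<Longrightarrow> exits l F x \<Longrightarrow> P (F (idx x)) \<Longrightarrow> P x"
    and diverge: "\<And>x. \<not> exits l F x \<Longrightarrow> P x"
  shows "P x"
proof (cases "exits l F x")
  case True
  have "\<forall>x. exits l F x \<longrightarrow> exit_time l F x = n \<longrightarrow> P x" for n
  proof (induction n rule: less_induct)
    case (less n)
    show ?case
    proof (intro allI impI)
      fix x assume e: "exits l F x" and n: "exit_time l F x = n"
      show "P x"
      proof (cases "cont l x")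
        case True
        then show ?thesis using less e n step exit_time_step exits_step by (metis lessI)
      qed (use exit in auto)
    qed
  qed
  then show ?thesis using True by blast
qed (use diverge in auto)

lemma resolve_vcomp: "has_idx z \<Longrightarrow> resolve l F (vcomp z x) = vcomp z (resolve l F x)"
proof (cases "cont l x")
  case True
  assume z: "has_idx z"
  have "cont l (vcomp z x)" using True cont_vcomp[OF z] by simp
  then have "resolve l F (vcomp z x) = vcomp (vcomp z x) (resolve l F (F (idx x)))"
    by (simp only: resolve_step idx_vcomp[OF z])
  also have "\<dots> = vcomp z (resolve l F x)" by (simp only: resolve_step[OF True] vcomp_assoc)
  finally show ?thesis .
next
  case False
  assume z: "has_idx z"
  have "\<not> cont l (vcomp z x)" using False cont_vcomp[OF z] by simp
  then show ?thesis using resolve_exit[OF False] by (simp add: resolve_exit)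
qed

lemma not_cont_resolve: "\<not> cont l (resolve l F x)"
proof (induction x rule: resolve_induct[where l = l and F = F])
  case (step x) then show ?case using resolve_step[OF step(1)] cont_vcomp cont_has_idx by metis
qed (simp_all add: resolve_exit resolve_diverge)

lemma inT_resolve:
  assumes F: "\<And>y. y \<in> {1..l} \<Longrightarrow> inT n (F y)"
  shows "inT n x \<Longrightarrow> inT n (resolve l F x)"
proof (induction x rule: resolve_induct[where l = l and F = F])
  case (step x)
  then have "inT n (resolve l F (F (idx x)))" using F cont_idx by blast
  then show ?case using resolve_step[OF step(1)] inT_vcomp by simp
qed (simp_all add: resolve_exit resolve_diverge)

lemma exits_if_has_idx_resolve: "has_idx (resolve l F x) \<Longrightarrow> exits l F x"
  by (metis has_idx.simps(3,4) resolve_diverge)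

lemma arr_inT: "arr m n f \<Longrightarrow> i \<in> {1..m} \<Longrightarrow> inT n (f i)"
  unfolding arr_def by blast

lemma arr_idx: "arr m n f \<Longrightarrow> i \<in> {1..m} \<Longrightarrow> has_idx (f i) \<Longrightarrow> idx (f i) \<in> {1..n}"
  using arr_inT inT_iff by blast

lemma arr_extensional: "arr m n f \<Longrightarrow> f \<in> extensional {1..m}"
  unfolding arr_def by blast

lemma arr_realizable:
  assumes "arr m n f" "i \<in> {1..m}" "j \<in> {1..m}" "f i = Idx k" "has_idx (f j)" "idx (f j) = k"
  shows "i = j"
proof (rule ccontr)
  assume "i \<noteq> j"
  hence "case f i of Idx k \<Rightarrow> f j \<noteq> Idx k \<and> (\<forall>r. f j \<noteq> Wt r k) | _ \<Rightarrow> True"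
    using assms(1-3) unfolding arr_def by blast
  thus False using assms(4-6) by (cases "f j") auto
qed

lemma arrI:
  assumes "\<And>i. i \<in> {1..m} \<Longrightarrow> inT n (f i)"
    and "\<And>i j k. i \<in> {1..m} \<Longrightarrow> j \<in> {1..m} \<Longrightarrow> f i = Idx k \<Longrightarrow> has_idx (f j) \<Longrightarrow>
           idx (f j) = k \<Longrightarrow> i = j"
    and "f \<in> extensional {1..m}"
  shows "arr m n f"
  unfolding arr_def
proof (intro conjI ballI impI)
  fix i j assume i: "i \<in> {1..m}" and j: "j \<in> {1..m}" and "i \<noteq> j"
  show "case f i of Idx k \<Rightarrow> f j \<noteq> Idx k \<and> (\<forall>r. f j \<noteq> Wt r k) | _ \<Rightarrow> True"
  proof (cases "f i")
    case (Idx k)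
    then have "\<not> (has_idx (f j) \<and> idx (f j) = k)" using assms(2)[OF i j] \<open>i \<noteq> j\<close> by blast
    then show ?thesis using Idx by auto
  qed auto
qed (use assms(1,3) in blast)+

section \<open>Eventually periodic weight sequences\<close>

lemma eventually_periodic_mult:
  fixes w :: "nat \<Rightarrow> 'a" and s P j k :: nat
  assumes "\<forall>j\<ge>s. w (j + P) = w j"
  shows "j \<ge> s \<Longrightarrow> w (j + k * P) = w j"
proof (induction k)
  case (Suc k)
  have "w (j + Suc k * P) = w ((j + k * P) + P)" by (simp add: algebra_simps)
  also have "\<dots> = w (j + k * P)" using assms Suc.prems by simp
  finally show ?case using Suc by simp
qed simp

lemma periodic_sum_window:
  fixes w :: "nat \<Rightarrow> real"
  assumes per: "\<forall>j\<ge>s. w (j + P) = w j"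
  shows "s \<le> M \<Longrightarrow> (\<Sum>j\<in>{M..<M+P}. w j) = (\<Sum>j\<in>{s..<s+P}. w j)"
proof (induction M rule: dec_induct)
  case (step M)
  have "(\<Sum>j\<in>{M..<M+P}. w j) + w (M+P) = w M + (\<Sum>j\<in>{Suc M..<Suc M+P}. w j)"
    by (cases P) (simp_all add: sum.atLeast_Suc_lessThan)
  moreover have "w (M+P) = w M" using per step by simp
  ultimately show ?case using step by simp
qed simp

lemma periodic_sum_close_to_mean:
  fixes w :: "nat \<Rightarrow> real"
  assumes P: "0 < P" and per: "\<forall>j\<ge>s. w (j + P) = w j"
  defines "C \<equiv> \<Sum>j\<in>{s..<s+P}. w j"
  shows "\<exists>B. \<forall>M. \<bar>(\<Sum>j<M. w j) - M * C / P\<bar> \<le> B"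
proof -
  define D where "D M = (\<Sum>j<M. w j) - M * C / P" for M
  have D_periodic: "D (M + P) = D M" if "s \<le> M" for M
  proof -
    have "(\<Sum>j<M+P. w j) = (\<Sum>j<M. w j) + (\<Sum>j\<in>{M..<M+P}. w j)"
      by (subst (1 2) lessThan_atLeast0, rule sum.atLeastLessThan_concat[symmetric]) auto
    also have "(\<Sum>j\<in>{M..<M+P}. w j) = C" unfolding C_def using periodic_sum_window[OF per that] .
    finally show ?thesis unfolding D_def using P by (simp add: field_simps)
  qed
  have D_range: "D M \<in> D ` {..<s+P}" for M
  proof (induction M rule: less_induct)
    case (less M)
    show ?case
    proof (cases "M < s + P")
      case False
      then have "D M = D (M - P)" using D_periodic[of "M - P"] by simp
      then show ?thesis using less[of "M - P"] False P by simp
    qed simp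
  qed
  have "\<bar>D M\<bar> \<le> Max ((\<lambda>M. \<bar>D M\<bar>) ` {..<s+P})" for M
    using D_range[of M] by (auto intro: Max_ge)
  thus ?thesis unfolding D_def by blast
qed

lemma periodic_sum_bdd_below_iff:
  fixes w :: "nat \<Rightarrow> real" and \<gamma> :: "nat \<Rightarrow> nat"
  assumes P: "0 < P" and per: "\<forall>j\<ge>s. w (j + P) = w j" and cofinal: "\<forall>J. J \<le> \<gamma> J"
  shows "(\<exists>B. \<forall>J. B \<le> (\<Sum>j<\<gamma> J. w j)) \<longleftrightarrow> 0 \<le> (\<Sum>j\<in>{s..<s+P}. w j)"
proof -
  define C where "C = (\<Sum>j\<in>{s..<s+P}. w j)"
  obtain B' where B': "\<And>M. \<bar>(\<Sum>j<M. w j) - M * C / P\<bar> \<le> B'"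
    using periodic_sum_close_to_mean[OF P per] unfolding C_def by blast
  show ?thesis unfolding C_def[symmetric]
  proof
    assume "\<exists>B. \<forall>J. B \<le> (\<Sum>j<\<gamma> J. w j)"
    then obtain B where B: "\<And>J. B \<le> (\<Sum>j<\<gamma> J. w j)" by blast
    show "0 \<le> C"
    proof (rule ccontr)
      assume "\<not> 0 \<le> C"
      obtain J :: nat where J: "(B' - B) * P / (- C) < J" using reals_Archimedean2 by blast
      have "J * C / P < B - B'" using J \<open>\<not> 0 \<le> C\<close> P by (simp add: field_simps)
      moreover have "\<gamma> J * C / P \<le> J * C / P" using cofinal \<open>\<not> 0 \<le> C\<close> P
        by (simp add: divide_right_mono mult_right_mono_neg)
      moreover have "(\<Sum>j<\<gamma> J. w j) \<le> \<gamma> J * C / P + B'" using B'[of "\<gamma> J"] by (simp add: abs_le_iff)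
      ultimately show False using B[of J] by linarith
    qed
  next
    assume "0 \<le> C"
    then have "0 \<le> \<gamma> J * C / P" for J by simp
    then have "- B' \<le> (\<Sum>j<\<gamma> J. w j)" for J
      using B'[of "\<gamma> J"] unfolding abs_le_iff by (smt (verit))
    then show "\<exists>B. \<forall>J. B \<le> (\<Sum>j<\<gamma> J. w j)" by blast
  qed
qed

lemma sum_enumerate:
  fixes w :: "nat \<Rightarrow> real"
  assumes inf: "infinite J" and zero: "\<forall>j. j \<notin> J \<longrightarrow> w j = 0"
  shows "(\<Sum>t<Suc N. w (enumerate J t)) = (\<Sum>j<Suc (enumerate J N). w j)"
proof -
  let ?e = "enumerate J"
  have mono: "strict_mono ?e" using strict_mono_enumerate[OF inf] .
  have "{..<Suc (?e N)} \<inter> J = ?e ` {..<Suc N}"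
  proof
    show "{..<Suc (?e N)} \<inter> J \<subseteq> ?e ` {..<Suc N}"
    proof
      fix j assume j: "j \<in> {..<Suc (?e N)} \<inter> J"
      then obtain m where m: "?e m = j" using enumerate_Ex[OF inf] by blast
      hence "m \<le> N" using j mono by (auto simp: strict_mono_less_eq less_Suc_eq_le)
      thus "j \<in> ?e ` {..<Suc N}" using m by auto
    qed
  qed (use enumerate_in_set[OF inf] mono in \<open>auto simp: strict_mono_less_eq less_Suc_eq_le\<close>)
  moreover have "(\<Sum>j<Suc (?e N). w j) = sum w ({..<Suc (?e N)} \<inter> J)"
    by (rule sum.mono_neutral_cong_right) (use zero in auto)
  ultimately show ?thesis by (simp add: sum.reindex[OF strict_mono_imp_inj_on[OF mono]])
qed

lemma tendsto_div_Suc: "(\<lambda>N. (B::real) / real (Suc N)) \<longlonglongrightarrow> 0"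
  using tendsto_mult_right_zero[OF LIMSEQ_inverse_real_of_nat, of B] by (simp add: divide_inverse)

lemma periodic_mean_liminf_le:
  fixes w :: "nat \<Rightarrow> real" and h :: "nat \<Rightarrow> nat"
  assumes P: "0 < P" and per: "\<forall>j\<ge>s. w (j + P) = w j" and cofinal: "\<forall>N. N \<le> h N"
    and neg: "(\<Sum>j\<in>{s..<s+P}. w j) < 0"
  shows "liminf (\<lambda>N. ereal ((\<Sum>j<Suc (h N). w j) / real (Suc N))) \<le> (\<Sum>j\<in>{s..<s+P}. w j) / P"
proof -
  define C where "C = (\<Sum>j\<in>{s..<s+P}. w j)"
  obtain B where B: "\<And>M. \<bar>(\<Sum>j<M. w j) - M * C / P\<bar> \<le> B"
    using periodic_sum_close_to_mean[OF P per] unfolding C_def by blast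
  have "(\<Sum>j<Suc (h N). w j) / real (Suc N) \<le> C / P + B / real (Suc N)" for N
  proof -
    have "real (Suc (h N)) * C / P \<le> real (Suc N) * C / P"
      using cofinal neg P unfolding C_def by (simp add: divide_right_mono mult_right_mono_neg)
    hence "(\<Sum>j<Suc (h N). w j) \<le> real (Suc N) * C / P + B"
      using B[of "Suc (h N)"] by (simp add: abs_le_iff)
    hence "(\<Sum>j<Suc (h N). w j) / real (Suc N) \<le> (real (Suc N) * C / P + B) / real (Suc N)"
      by (rule divide_right_mono) simp
    also have "\<dots> = C / P + B / real (Suc N)" by (simp add: field_simps)
    finally show ?thesis .
  qed
  hence "liminf (\<lambda>N. ereal ((\<Sum>j<Suc (h N). w j) / real (Suc N)))
      \<le> liminf (\<lambda>N. ereal (C / P + B / real (Suc N)))"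
    by (intro Liminf_mono) auto
  also have "\<dots> = ereal (C / P)"
  proof (intro lim_imp_Liminf)
    have "(\<lambda>N. C / P + B / real (Suc N)) \<longlonglongrightarrow> C / P + 0"
      by (intro tendsto_add tendsto_const tendsto_div_Suc)
    then show "(\<lambda>N. ereal (C / P + B / real (Suc N))) \<longlonglongrightarrow> ereal (C / P)"
      by (simp add: lim_ereal)
  qed simp
  finally show ?thesis unfolding C_def .
qed

lemma periodic_mean_liminf_nonneg:
  fixes w :: "nat \<Rightarrow> real" and h :: "nat \<Rightarrow> nat"
  assumes P: "0 < P" and per: "\<forall>j\<ge>s. w (j + P) = w j" and nonneg: "0 \<le> (\<Sum>j\<in>{s..<s+P}. w j)"
  shows "0 \<le> liminf (\<lambda>N. ereal ((\<Sum>j<Suc (h N). w j) / real (Suc N)))"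
proof -
  obtain B where B: "\<And>M. B \<le> (\<Sum>j<M. w j)"
    using periodic_sum_bdd_below_iff[OF P per, of id] nonneg by auto
  have "min B 0 / real (Suc N) \<le> (\<Sum>j<Suc (h N). w j) / real (Suc N)" for N
    by (rule divide_right_mono) (use B[of "Suc (h N)"] in auto)
  hence "liminf (\<lambda>N. ereal (min B 0 / real (Suc N)))
      \<le> liminf (\<lambda>N. ereal ((\<Sum>j<Suc (h N). w j) / real (Suc N)))"
    by (intro Liminf_mono) auto
  moreover have "liminf (\<lambda>N. ereal (min B 0 / real (Suc N))) = ereal 0"
    by (rule lim_imp_Liminf) (simp, simp only: lim_ereal tendsto_div_Suc)
  ultimately show ?thesis by (simp add: zero_ereal_def)
qed

lemma periodic_mean_liminf_nonneg_iff:
  fixes w :: "nat \<Rightarrow> real"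
  assumes P: "0 < P" and per: "\<forall>j\<ge>s. w (j + P) = w j"
    and inf: "infinite J" and zero: "\<forall>j. j \<notin> J \<longrightarrow> w j = 0"
  shows "0 \<le> liminf (\<lambda>N. ereal ((\<Sum>t<Suc N. w (enumerate J t)) / real (Suc N)))
          \<longleftrightarrow> 0 \<le> (\<Sum>j\<in>{s..<s+P}. w j)"
  unfolding sum_enumerate[OF inf zero]
proof
  let ?C = "\<Sum>j\<in>{s..<s+P}. w j"
  assume L: "0 \<le> liminf (\<lambda>N. ereal ((\<Sum>j<Suc (enumerate J N). w j) / real (Suc N)))"
  show "0 \<le> ?C"
  proof (rule ccontr)
    assume "\<not> 0 \<le> ?C"
    then have "?C < 0" "?C / P < 0" using P by (simp_all add: divide_neg_pos)
    moreover have "\<forall>N. N \<le> enumerate J N" using le_enumerate[OF inf] by blast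
    ultimately have "(0::ereal) \<le> ereal (?C / P)"
      using L periodic_mean_liminf_le[OF P per] order.trans by blast
    then show False using \<open>?C / P < 0\<close> by simp
  qed
qed (rule periodic_mean_liminf_nonneg[OF P per])

lemma orbit_eventually_periodic:
  assumes c: "\<forall>t. cont l (orbit F x t)"
  shows "\<exists>s P. 0 < P \<and> (\<forall>j\<ge>s. orbit F x (j + P) = orbit F x j)"
proof -
  let ?h = "\<lambda>t. idx (orbit F x t)"
  have "\<not> inj_on ?h {0..l}"
  proof
    assume "inj_on ?h {0..l}"
    moreover have "?h ` {0..l} \<subseteq> {1..l}" using c cont_idx by blast
    ultimately have "card {0..l} \<le> card {1..l}" using card_inj_on_le by blast
    then show False by simp
  qed
  then obtain a b where "a \<noteq> b" "?h a = ?h b" unfolding inj_on_def by blast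
  then obtain a b where ab: "a < b" "?h a = ?h b" by (metis linorder_neqE_nat)
  have eq: "orbit F x (Suc a + d) = orbit F x (Suc b + d)" for d
    by (induction d) (use ab in auto)
  have "orbit F x (j + (b - a)) = orbit F x j" if j: "Suc a \<le> j" for j
  proof -
    obtain d where d: "j = Suc a + d" using le_Suc_ex[OF j] by blast
    then have "j + (b - a) = Suc b + d" using ab(1) by simp
    then show ?thesis using eq[of d] d by metis
  qed
  thus ?thesis using ab(1) by (intro exI[of _ "Suc a"] exI[of _ "b - a"]) auto
qed

lemma weight_bdd_below_iff_cofinal:
  assumes c: "\<forall>t. cont l (orbit F x t)" and cofinal: "\<forall>J. J \<le> \<gamma> J"
  shows "(\<exists>B. \<forall>J. B \<le> orbit_weight F x (\<gamma> J)) \<longleftrightarrow> weight_bdd_below F x"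
proof -
  obtain s P where P: "0 < P" and per: "\<forall>j\<ge>s. orbit F x (j + P) = orbit F x j"
    using orbit_eventually_periodic[OF c] by blast
  have "\<forall>j\<ge>s. wt (orbit F x (j + P)) = wt (orbit F x j)" using per by simp
  from periodic_sum_bdd_below_iff[OF P this cofinal] periodic_sum_bdd_below_iff[OF P this, of id]
  show ?thesis unfolding weight_bdd_below_def orbit_weight_def by simp
qed

text \<open>Realizability forbids an orbit from ending in a cycle of unweighted steps: such a cycle
  could be followed backwards, step by step, to the entry point \<open>l + i\<close>, which is
  not a loop index.\<close>
lemma infinite_weighted_steps:
  assumes f: "arr (l+a) (l+n) f" and i: "i \<in> {1..a}"
    and c: "\<forall>t. cont l (orbit f (f (l+i)) t)"
  shows "infinite {t. is_wt (orbit f (f (l+i)) t)}"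
proof
  let ?p = "orbit f (f (l+i))"
  define u where "u t = (case t of 0 \<Rightarrow> l + i | Suc t' \<Rightarrow> idx (?p t'))" for t
  have p_u: "?p t = f (u t)" for t by (cases t) (simp_all add: u_def)
  have u_Suc: "u (Suc t) = idx (?p t)" for t by (simp add: u_def)
  have "idx (?p t) \<in> {1..l}" for t using c cont_idx by blast
  then have u_loop: "u t \<in> {1..l}" if "0 < t" for t
    using that by (cases t) (simp_all add: u_def)
  have u_dom: "u t \<in> {1..l+a}" for t
    using u_loop[of t] i by (cases t) (auto simp: u_def)
  assume "finite {t. is_wt (?p t)}"
  then obtain m where m: "\<forall>t\<ge>m. \<not> is_wt (?p t)"
    by (metis (mono_tags, lifting) finite_nat_set_iff_bounded_le mem_Collect_eq not_less_eq_eq)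
  have plain: "?p t = Idx (u (Suc t))" if "m \<le> t" for t
    using m that c[rule_format, of t] by (cases "?p t") (auto simp: u_def)
  obtain s P where P: "0 < P" and per: "\<forall>j\<ge>s. ?p (j + P) = ?p j"
    using orbit_eventually_periodic[OF c] by blast
  define d where "d = Suc (s + m) * P"
  have d: "s + m < d" unfolding d_def using P by (cases P) auto
  have "u (Suc s + d) = u (Suc s)"
    using eventually_periodic_mult[OF per order.refl, of "Suc (s + m)"] by (simp add: u_Suc d_def)
  define q where "q = (LEAST q. u (q + d) = u q)"
  have q: "u (q + d) = u q"
    unfolding q_def by (rule LeastI[where P = "\<lambda>q. u (q + d) = u q"]) fact
  show False
  proof (cases q)
    case 0
    then show False using q u_loop[of d] d i by (simp add: u_def)
  next
    case (Suc q')
    have "f (u (q' + d)) = Idx (u q)" using plain[of "q' + d"] d q p_u Suc by simp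
    moreover have "has_idx (f (u q'))" using cont_has_idx c p_u by metis
    moreover have "idx (f (u q')) = u q" using u_Suc[of q'] p_u Suc by simp
    ultimately have "u (q' + d) = u q'" using arr_realizable[OF f u_dom u_dom] by blast
    then show False using not_less_Least[of q' "\<lambda>q. u (q + d) = u q"] Suc q_def by simp
  qed
qed

section \<open>The trace as a resolution\<close>

declare walk.simps(2) [simp del]

lemma walk_eq_orbit:
  "(\<forall>t<j. cont l (orbit f (f (l+i)) t)) \<Longrightarrow> walk l f i (Suc j) = orbit f (f (l+i)) j"
  by (induction j) (auto simp: walk.simps)

lemma wt_unweighted: "\<not> is_wt x \<Longrightarrow> wt x = 0"
  by (cases x) auto

lemma sum_wt_unweighted: "(\<forall>j\<le>K. \<not> is_wt (p j)) \<Longrightarrow> (\<Sum>j\<le>K. wt (p j)) = 0"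
  by (simp add: wt_unweighted)

lemma vcomp_upto_eq:
  "(\<forall>j<K. has_idx (p j)) \<Longrightarrow> vcomp_upto p K =
     (case p K of ExS \<Rightarrow> ExS | AllS \<Rightarrow> AllS
      | _ \<Rightarrow> if \<forall>j\<le>K. \<not> is_wt (p j) then Idx (idx (p K)) else Wt (\<Sum>j\<le>K. wt (p j)) (idx (p K)))"
proof (induction K arbitrary: p)
  case 0
  then show ?case by (cases "p 0") auto
next
  case (Suc K)
  have IH: "vcomp_upto (\<lambda>j. p (Suc j)) K =
     (case p (Suc K) of ExS \<Rightarrow> ExS | AllS \<Rightarrow> AllS
      | _ \<Rightarrow> if \<forall>j\<le>K. \<not> is_wt (p (Suc j)) then Idx (idx (p (Suc K)))
            else Wt (\<Sum>j\<le>K. wt (p (Suc j))) (idx (p (Suc K))))"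
    using Suc by simp
  have unweighted: "(\<forall>j\<le>Suc K. \<not> is_wt (p j)) \<longleftrightarrow> \<not> is_wt (p 0) \<and> (\<forall>j\<le>K. \<not> is_wt (p (Suc j)))"
    unfolding less_Suc_eq_le[symmetric] by (rule All_less_Suc2)
  have sum: "(\<Sum>j\<le>Suc K. wt (p j)) = wt (p 0) + (\<Sum>j\<le>K. wt (p (Suc j)))"
    by (rule sum.atMost_Suc_shift)
  have "has_idx (p 0)" using Suc.prems by auto
  then show ?case unfolding vcomp_upto.simps IH unweighted sum
    by (cases "p 0"; cases "p (Suc K)") (auto simp: sum_wt_unweighted)
qed

lemma vcomp_upto_has_idx:
  assumes "\<forall>j<K. has_idx (p j)" and "has_idx (p K)"
  shows "idx (vcomp_upto p K) = idx (p K)" "wt (vcomp_upto p K) = (\<Sum>j\<le>K. wt (p j))"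
  using assms(2) unfolding vcomp_upto_eq[OF assms(1)]
  by (cases "p K"; simp add: sum_wt_unweighted)+

lemma vcomp_upto_has_idx_iff: "\<forall>j<K. has_idx (p j) \<Longrightarrow> has_idx (vcomp_upto p K) \<longleftrightarrow> has_idx (p K)"
  by (cases "p K") (simp_all add: vcomp_upto_eq)

lemma walk_end_if_exits:
  assumes e: "exits l f (f (l+i))"
  shows "walk_finite l f i" "walk_end l f i = Suc (exit_time l f (f (l+i)))"
proof -
  let ?p = "orbit f (f (l+i))" and ?v = "walk l f i" and ?K = "exit_time l f (f (l+i))"
  have v: "?v (Suc j) = ?p j" if "j \<le> ?K" for j
    using walk_eq_orbit cont_before_exit_time that by (metis order.strict_trans2)
  have exit: "\<not> cont l (?v (Suc ?K))" using v not_cont_exit_time[OF e] by simp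
  then show "walk_finite l f i" unfolding walk_finite_def by (intro exI[of _ "Suc ?K"]) simp
  show "walk_end l f i = Suc ?K" unfolding walk_end_def
  proof (rule Least_equality)
    fix K assume K: "1 \<le> K \<and> \<not> cont l (?v K)"
    show "Suc ?K \<le> K"
    proof (rule ccontr)
      assume "\<not> Suc ?K \<le> K"
      then obtain j where "K = Suc j" "j < ?K" using K by (cases K) auto
      thus False using K v[of j] cont_before_exit_time by simp
    qed
  qed (use exit in simp)
qed

lemma case_Wt_inT: "inT n x \<Longrightarrow> (case x of Wt r k \<Rightarrow> if k \<in> {1..n} then r else 0 | _ \<Rightarrow> 0) = wt x"
  by (cases x) auto

lemma trace_val_if_exits:
  assumes f: "arr (l+a) (l+n) f" and i: "i \<in> {1..a}" and e: "exits l f (f (l+i))"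
  shows "trace_val l n f i = unshift l (resolve l f (f (l+i)))"
proof -
  let ?p = "orbit f (f (l+i))" and ?v = "walk l f i"
  define K where "K = exit_time l f (f (l+i))"
  have cont: "\<forall>t<K. cont l (?p t)" unfolding K_def using cont_before_exit_time by blast
  have v: "?v (Suc j) = ?p j" if "j \<le> K" for j using walk_eq_orbit cont that by auto
  have inT: "inT (l+n) (?p j)" if "j \<le> K" for j
  proof (cases j)
    case (Suc j')
    then have "j' < K" using that by simp
    then have "idx (?p j') \<in> {1..l}" using cont cont_idx by blast
    then show ?thesis using arr_inT[OF f, of "idx (?p j')"] Suc by simp
  qed (use arr_inT[OF f] i in simp)
  have S: "(\<Sum>j\<in>{1..Suc K}. case ?v j of Wt r k \<Rightarrow> if k \<in> {1..l+n} then r else 0 | _ \<Rightarrow> 0)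
      = (\<Sum>j\<le>K. wt (?p j))"
  proof -
    have "(\<Sum>j\<in>{1..Suc K}. case ?v j of Wt r k \<Rightarrow> if k \<in> {1..l+n} then r else 0 | _ \<Rightarrow> 0)
        = (\<Sum>j\<in>{0..K}. case ?v (Suc j) of Wt r k \<Rightarrow> if k \<in> {1..l+n} then r else 0 | _ \<Rightarrow> 0)"
      unfolding One_nat_def by (rule sum.shift_bounds_cl_Suc_ivl)
    also have "\<dots> = (\<Sum>j\<le>K. wt (?p j))"
      unfolding atMost_atLeast0 by (rule sum.cong) (simp_all add: v inT case_Wt_inT)
    finally show ?thesis .
  qed
  have plain: "(\<forall>j\<in>{1..<Suc K}. \<exists>q. ?v j = Idx q) \<longleftrightarrow> (\<forall>j<K. \<not> is_wt (?p j))"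
  proof -
    have "(\<exists>q. ?p j = Idx q) \<longleftrightarrow> \<not> is_wt (?p j)" if "j < K" for j
      using cont_has_idx[of l "?p j"] cont that by (cases "?p j") auto
    then show ?thesis using v by (auto simp: Ball_def less_Suc_eq_0_disj)
  qed
  have "trace_val l n f i = (case ?p K of ExS \<Rightarrow> ExS | AllS \<Rightarrow> AllS
      | Idx q \<Rightarrow> if \<forall>j<K. \<not> is_wt (?p j) then Idx (q - l) else Wt (\<Sum>j\<le>K. wt (?p j)) (q - l)
      | Wt r q \<Rightarrow> Wt (\<Sum>j\<le>K. wt (?p j)) (q - l))"
    unfolding trace_val_def Let_def walk_end_if_exits[OF e] K_def[symmetric] S plain
    using walk_end_if_exits(1)[OF e] v[of K] by simp
  moreover have "resolve l f (f (l+i)) = vcomp_upto ?p K"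
    unfolding resolve_def K_def using e by simp
  moreover have "\<forall>j<K. has_idx (?p j)" using cont cont_has_idx by blast
  moreover have "(\<forall>j\<le>K. \<not> is_wt (?p j)) \<longleftrightarrow> (\<forall>j<K. \<not> is_wt (?p j)) \<and> \<not> is_wt (?p K)"
    by (auto simp: le_less)
  ultimately show ?thesis by (cases "?p K") (simp_all add: vcomp_upto_eq)
qed

lemma walk_if_not_exits:
  assumes ne: "\<not> exits l f (f (l+i))"
  shows "walk l f i (Suc j) = orbit f (f (l+i)) j" "\<not> walk_finite l f i"
proof -
  have cont: "\<forall>t. cont l (orbit f (f (l+i)) t)" using cont_orbit_if_not_exits[OF ne] by blast
  then show v: "walk l f i (Suc j) = orbit f (f (l+i)) j" for j using walk_eq_orbit by blast
  show "\<not> walk_finite l f i"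
  proof
    assume "walk_finite l f i"
    then obtain K where "1 \<le> K" "\<not> cont l (walk l f i K)" unfolding walk_finite_def by blast
    then show False using v cont by (cases K) auto
  qed
qed

lemma weighted_walk_steps:
  assumes ne: "\<not> exits l f (f (l+i))"
  shows "{j. 1 \<le> j \<and> is_wt (walk l f i j) \<and> idx (walk l f i j) \<in> {1..l}}
    = Suc ` {t. is_wt (orbit f (f (l+i)) t)}" (is "?J = _")
proof (intro set_eqI iffI)
  fix j assume j: "j \<in> ?J"
  then obtain t where "j = Suc t" by (cases j) auto
  then show "j \<in> Suc ` {t. is_wt (orbit f (f (l+i)) t)}" using j walk_if_not_exits[OF ne] by auto
next
  fix j assume "j \<in> Suc ` {t. is_wt (orbit f (f (l+i)) t)}"
  then obtain t where "j = Suc t" "is_wt (orbit f (f (l+i)) t)" by auto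
  then show "j \<in> ?J"
    using walk_if_not_exits[OF ne] cont_orbit_if_not_exits[OF ne] cont_idx by auto
qed

lemma trace_val_if_not_exits:
  assumes f: "arr (l+a) (l+n) f" and i: "i \<in> {1..a}" and ne: "\<not> exits l f (f (l+i))"
  shows "trace_val l n f i = unshift l (resolve l f (f (l+i)))"
proof -
  let ?x = "f (l+i)"
  let ?p = "orbit f ?x" and ?v = "walk l f i"
  define w where "w j = wt (?v j)" for j
  define J where "J = {j. 1 \<le> j \<and> is_wt (?v j) \<and> idx (?v j) \<in> {1..l}}"
  have v: "?v (Suc j) = ?p j" for j using walk_if_not_exits[OF ne] by blast
  have tv: "trace_val l n f i =
      (if 0 \<le> liminf (\<lambda>N. ereal ((\<Sum>t<Suc N. w (enumerate J t)) / real (Suc N))) then ExS else AllS)"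
    using walk_if_not_exits(2)[OF ne] unfolding trace_val_def Let_def J_def w_def by simp
  have J: "J = Suc ` {t. is_wt (?p t)}" unfolding J_def using weighted_walk_steps[OF ne] .
  have "infinite J" unfolding J using infinite_weighted_steps[OF f i] cont_orbit_if_not_exits[OF ne]
    by (simp add: finite_image_iff)
  moreover have "\<forall>j. j \<notin> J \<longrightarrow> w j = 0"
  proof (intro allI impI)
    fix j assume "j \<notin> J"
    then show "w j = 0" unfolding J w_def using v wt_unweighted by (cases j) auto
  qed
  moreover obtain s P where P: "0 < P" and per: "\<forall>j\<ge>s. ?p (j + P) = ?p j"
    using orbit_eventually_periodic cont_orbit_if_not_exits[OF ne] by blast
  moreover have per_w: "\<forall>j\<ge>Suc s. w (j + P) = w j"
  proof (intro allI impI)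
    fix j assume "Suc s \<le> j"
    then obtain j' where "j = Suc j'" "s \<le> j'" by (cases j) auto
    then show "w (j + P) = w j" using per v unfolding w_def by simp
  qed
  ultimately have "0 \<le> liminf (\<lambda>N. ereal ((\<Sum>t<Suc N. w (enumerate J t)) / real (Suc N)))
      \<longleftrightarrow> (\<exists>B. \<forall>M. B \<le> (\<Sum>j<M. w j))"
    using periodic_mean_liminf_nonneg_iff[OF P per_w] periodic_sum_bdd_below_iff[OF P per_w, of id]
    by simp
  also have "\<dots> \<longleftrightarrow> weight_bdd_below f ?x"
    unfolding weight_bdd_below_def
  proof (rule bdd_below_Suc_iff[where c = 0])
    show "(\<Sum>j<Suc N. w j) = 0 + orbit_weight f ?x N" for N
      unfolding sum.lessThan_Suc_shift w_def orbit_weight_def v by simp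
  qed simp
  finally show ?thesis unfolding tv resolve_diverge[OF ne] by simp
qed

lemma tr_apply:
  "arr (l+a) (l+n) f \<Longrightarrow> i \<in> {1..a} \<Longrightarrow> tr l a n f i = unshift l (resolve l f (f (l+i)))"
  unfolding tr_def
  by (cases "exits l f (f (l+i))") (simp_all add: trace_val_if_exits trace_val_if_not_exits)

lemma tr_extensional: "tr l m n f \<in> extensional {1..m}"
  unfolding tr_def by simp

section \<open>The symmetric monoidal structure\<close>

lemma arr_comp: assumes f: "arr a b f" and g: "arr b c g" shows "arr a c (comp a b c f g)"
proof (rule arrI)
  fix i assume i: "i \<in> {1..a}"
  show "inT c (comp a b c f g i)"
  proof (cases "has_idx (f i)")
    case True
    then show ?thesis using comp_apply[OF i] arr_idx[OF f i] arr_inT[OF g] inT_vcomp by simp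
  next
    case False
    then show ?thesis using comp_apply[OF i] by (cases "f i") auto
  qed
next
  fix i j k assume i: "i \<in> {1..a}" and j: "j \<in> {1..a}" and e: "comp a b c f g i = Idx k"
    and x: "has_idx (comp a b c f g j)" and y: "idx (comp a b c f g j) = k"
  have ei: "f i = Idx (idx (f i))" "g (idx (f i)) = Idx k" using vcomp_eq_IdxD e comp_apply[OF i] by metis+
  have fj: "has_idx (f j)" "has_idx (g (idx (f j)))" using has_idx_vcompD x comp_apply[OF j] by metis+
  have y2: "idx (g (idx (f j))) = k" using y unfolding comp_apply[OF j] idx_vcomp[OF fj(1)] .
  have fi: "has_idx (f i)" by (subst ei(1)) simp
  have d1: "idx (f i) \<in> {1..b}" using arr_idx[OF f i fi] .
  have d2: "idx (f j) \<in> {1..b}" using arr_idx[OF f j fj(1)] .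
  have "idx (f i) = idx (f j)" using arr_realizable[OF g d1 d2 ei(2) fj(2) y2] .
  thus "i = j" using arr_realizable[OF f i j ei(1) fj(1)] by simp
qed (rule comp_extensional)

lemma ident_apply: "i \<in> {1..m} \<Longrightarrow> ident m i = Idx i"
  unfolding ident_def by simp

lemma ident_extensional: "ident m \<in> extensional {1..m}"
  unfolding ident_def by simp

lemma arr_ident: "arr a a (ident a)"
  by (rule arrI[OF _ _ ident_extensional]) (auto simp: ident_apply)

lemma comp_ident_left: "arr a b f \<Longrightarrow> comp a a b (ident a) f = f"
  by (rule extensionalityI[OF comp_extensional arr_extensional]) (auto simp: comp_apply ident_apply)

lemma comp_ident_right: assumes f: "arr a b f" shows "comp a b b f (ident b) = f"
proof (rule extensionalityI[OF comp_extensional arr_extensional[OF f]])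
  fix i assume i: "i \<in> {1..a}"
  show "comp a b b f (ident b) i = f i"
  proof (cases "has_idx (f i)")
    case True
    then show ?thesis using comp_apply[OF i] ident_apply[OF arr_idx[OF f i True]] vcomp_Idx_idx by simp
  next
    case False
    then show ?thesis using comp_apply[OF i] by (cases "f i") auto
  qed
qed

lemma comp_assoc:
  assumes f: "arr a b f" and g: "arr b c g" and h: "arr c d h"
  shows "comp a c d (comp a b c f g) h = comp a b d f (comp b c d g h)"
proof (rule extensionalityI[OF comp_extensional comp_extensional])
  fix i assume i: "i \<in> {1..a}"
  show "comp a c d (comp a b c f g) h i = comp a b d f (comp b c d g h) i"
  proof (cases "has_idx (f i)")
    case True
    have j: "idx (f i) \<in> {1..b}" using arr_idx[OF f i True] .
    show ?thesis unfolding comp_apply[OF i] comp_apply[OF j] by (subst idx_vcomp[OF True]) (rule vcomp_assoc)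
  next
    case False
    then show ?thesis unfolding comp_apply[OF i] by (cases "f i") auto
  qed
qed

lemma category: "is_category arr comp ident"
  unfolding is_category_def
  using arr_comp arr_ident comp_ident_left comp_ident_right comp_assoc by blast

lemma tensor_apply: "i \<in> {1..m+m'} \<Longrightarrow> tensor m n m' n' f g i = (if i \<le> m then f i else shift n (g (i - m)))"
  unfolding tensor_def by simp

lemma tensor_extensional: "tensor m n m' n' f g \<in> extensional {1..m+m'}"
  unfolding tensor_def by simp

lemma arr_tensor:
  assumes f: "arr a b f" and g: "arr c d g"
  shows "arr (a+c) (b+d) (tensor a b c d f g)"
proof (rule arrI[OF _ _ tensor_extensional])
  let ?T = "tensor a b c d f g"
  fix i assume i: "i \<in> {1..a+c}"
  show "inT (b+d) (?T i)"
  proof (cases "i \<le> a")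
    case True
    then show ?thesis using i arr_inT[OF f, of i] by (auto simp: tensor_apply intro: inT_mono)
  next
    case False
    then have "inT d (g (i - a))" using i by (intro arr_inT[OF g]) auto
    then show ?thesis using False i by (simp add: tensor_apply inT_shift)
  qed
next
  let ?T = "tensor a b c d f g"
  have left: "idx (?T i) \<le> b \<longleftrightarrow> i \<le> a" if i: "i \<in> {1..a+c}" and x: "has_idx (?T i)" for i
  proof (cases "i \<le> a")
    case True
    then have "idx (f i) \<in> {1..b}" using i x arr_idx[OF f] by (simp add: tensor_apply)
    then show ?thesis using True i by (simp add: tensor_apply)
  next
    case False
    then have "i - a \<in> {1..c}" using i by auto
    then have "idx (g (i - a)) \<in> {1..d}" using x i False arr_idx[OF g] by (simp add: tensor_apply)
    then show ?thesis using False i x by (simp add: tensor_apply idx_shift)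
  qed
  fix i j k assume i: "i \<in> {1..a+c}" and j: "j \<in> {1..a+c}"
    and e: "?T i = Idx k" and x: "has_idx (?T j)" and y: "idx (?T j) = k"
  have "i \<le> a \<longleftrightarrow> j \<le> a" using left[OF i] left[OF j x] e y by simp
  then consider "i \<le> a" "j \<le> a" | "\<not> i \<le> a" "\<not> j \<le> a" by blast
  then show "i = j"
  proof cases
    case 1
    then show ?thesis using arr_realizable[OF f, of i j k] i j e x y by (simp add: tensor_apply)
  next
    case 2
    have "g (i - a) = Idx (k - b)" using e 2 i by (cases "g (i - a)") (auto simp: tensor_apply)
    moreover have "has_idx (g (j - a))" "idx (g (j - a)) = k - b"
      using x y 2 j by (auto simp: tensor_apply idx_shift)
    moreover have "i - a \<in> {1..c}" "j - a \<in> {1..c}" using i j 2 by auto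
    ultimately have "i - a = j - a" using arr_realizable[OF g] by blast
    then show ?thesis using 2 by simp
  qed
qed

lemma tensor_ident: "tensor a a c c (ident a) (ident c) = ident (a+c)"
proof (rule extensionalityI[OF tensor_extensional ident_extensional])
  fix i assume i: "i \<in> {1..a+c}"
  show "tensor a a c c (ident a) (ident c) i = ident (a+c) i"
  proof (cases "i \<le> a")
    case True
    then show ?thesis unfolding tensor_apply[OF i] ident_apply[OF i] using i by (simp add: ident_apply)
  next
    case False
    hence "i - a \<in> {1..c}" using i by auto
    then show ?thesis unfolding tensor_apply[OF i] ident_apply[OF i] using False by (simp add: ident_apply)
  qed
qed

lemma interchange:
  assumes f: "arr a b f" and f': "arr b e f'" and g: "arr c d g" and g': "arr d h g'"
  shows "comp (a+c) (b+d) (e+h) (tensor a b c d f g) (tensor b e d h f' g')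
          = tensor a e c h (comp a b e f f') (comp c d h g g')"
proof (rule extensionalityI[OF comp_extensional tensor_extensional])
  fix i assume i: "i \<in> {1..a+c}"
  show "comp (a+c) (b+d) (e+h) (tensor a b c d f g) (tensor b e d h f' g') i
          = tensor a e c h (comp a b e f f') (comp c d h g g') i"
  proof (cases "i \<le> a")
    case True
    hence i': "i \<in> {1..a}" using i by simp
    show ?thesis
    proof (cases "has_idx (f i)")
      case True
      have j: "idx (f i) \<in> {1..b}" using arr_idx[OF f i' True] .
      hence j2: "idx (f i) \<in> {1..b+d}" by simp
      show ?thesis unfolding comp_apply[OF i] tensor_apply[OF i] comp_apply[OF i'] using \<open>i \<le> a\<close> j
        by (simp add: tensor_apply[OF j2])
    next
      case False
      then show ?thesis unfolding comp_apply[OF i] tensor_apply[OF i] comp_apply[OF i'] using \<open>i \<le> a\<close>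
        by (cases "f i") auto
    qed
  next
    case False
    hence i': "i - a \<in> {1..c}" using i by auto
    show ?thesis
    proof (cases "has_idx (g (i - a))")
      case True
      have j: "idx (g (i - a)) \<in> {1..d}" using arr_idx[OF g i' True] .
      have j2: "b + idx (g (i - a)) \<in> {1..b+d}" using j by simp
      have "vcomp (shift b (g (i - a))) (tensor b e d h f' g' (b + idx (g (i - a))))
            = shift e (vcomp (g (i - a)) (g' (idx (g (i - a)))))"
        unfolding tensor_apply[OF j2] using j by (simp add: vcomp_shift shift_vcomp)
      then show ?thesis unfolding comp_apply[OF i] tensor_apply[OF i] comp_apply[OF i'] using \<open>\<not> i \<le> a\<close>
        by (simp add: idx_shift[OF True])
    next
      case False
      then show ?thesis unfolding comp_apply[OF i] tensor_apply[OF i] comp_apply[OF i'] using \<open>\<not> i \<le> a\<close>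
        by (cases "g (i - a)") auto
    qed
  qed
qed

lemma tensor_assoc:
  assumes f: "arr a b f" and g: "arr c d g" and k: "arr e h k"
  shows "tensor (a+c) (b+d) e h (tensor a b c d f g) k = tensor a b (c+e) (d+h) f (tensor c d e h g k)"
proof (rule extensionalityI[OF tensor_extensional])
  show "tensor a b (c+e) (d+h) f (tensor c d e h g k) \<in> extensional {1..a+c+e}"
    using tensor_extensional[of a b "c+e"] by (simp add: add.assoc)
  fix i assume i: "i \<in> {1..a+c+e}"
  have i2: "i \<in> {1..a+(c+e)}" using i by simp
  show "tensor (a+c) (b+d) e h (tensor a b c d f g) k i = tensor a b (c+e) (d+h) f (tensor c d e h g k) i"
  proof (cases "i \<le> a + c")
    case True
    hence i1: "i \<in> {1..a+c}" using i by simp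
    show ?thesis
    proof (cases "i \<le> a")
      case False
      hence i3: "i - a \<in> {1..c+e}" and le: "i - a \<le> c" using True i by auto
      show ?thesis unfolding tensor_apply[OF i] tensor_apply[OF i1] tensor_apply[OF i2] tensor_apply[OF i3]
        by (simp only: True False le if_True if_False)
    qed (simp add: tensor_apply[OF i] tensor_apply[OF i1] tensor_apply[OF i2] True)
  next
    case False
    hence i3: "i - a \<in> {1..c+e}" and n1: "\<not> i \<le> a" and n2: "\<not> i - a \<le> c"
      and e: "i - a - c = i - (a + c)" using i by auto
    show ?thesis unfolding tensor_apply[OF i] tensor_apply[OF i2] tensor_apply[OF i3]
      by (simp only: False n1 n2 e if_False shift_shift)
  qed
qed

lemma tensor_unit:
  assumes f: "arr a b f"
  shows "tensor 0 0 a b (ident 0) f = f \<and> tensor a b 0 0 f (ident 0) = f"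
proof
  show "tensor 0 0 a b (ident 0) f = f"
    by (rule extensionalityI[OF _ arr_extensional[OF f]]) (use tensor_extensional[of 0 0 a b] in \<open>auto simp: tensor_apply\<close>)
  show "tensor a b 0 0 f (ident 0) = f"
    by (rule extensionalityI[OF _ arr_extensional[OF f]]) (use tensor_extensional[of a b 0 0] in \<open>auto simp: tensor_apply\<close>)
qed

lemma strict_monoidal: "is_strict_monoidal arr comp ident tensor"
  unfolding is_strict_monoidal_def
  by (simp add: category arr_tensor tensor_ident interchange tensor_assoc tensor_unit)

lemma sym_apply: "i \<in> {1..m+n} \<Longrightarrow> sym m n i = (if i \<le> m then Idx (n + i) else Idx (i - m))"
  unfolding sym_def by simp

lemma sym_extensional: "sym m n \<in> extensional {1..m+n}"
  unfolding sym_def by simp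

lemma arr_sym: "arr (a+b) (b+a) (sym a b)"
proof (rule arrI[OF _ _ sym_extensional])
  fix i assume i: "i \<in> {1..a+b}"
  show "inT (b+a) (sym a b i)" unfolding sym_apply[OF i] using i by auto
next
  fix i j k assume i: "i \<in> {1..a+b}" and j: "j \<in> {1..a+b}"
    and e: "sym a b i = Idx k" and x: "has_idx (sym a b j)" and y: "idx (sym a b j) = k"
  show "i = j" using e y i j unfolding sym_apply[OF i] sym_apply[OF j]
    by (auto split: if_splits)
qed

lemma sym_inv: "comp (a+b) (b+a) (a+b) (sym a b) (sym b a) = ident (a+b)"
proof (rule extensionalityI[OF comp_extensional ident_extensional])
  fix i assume i: "i \<in> {1..a+b}"
  show "comp (a+b) (b+a) (a+b) (sym a b) (sym b a) i = ident (a+b) i"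
  proof (cases "i \<le> a")
    case True
    have j: "b + i \<in> {1..b+a}" using i True by auto
    show ?thesis unfolding comp_apply[OF i] ident_apply[OF i] sym_apply[OF i] using True i
      by (simp add: sym_apply[OF j])
  next
    case False
    have j: "i - a \<in> {1..b+a}" using i False by auto
    show ?thesis unfolding comp_apply[OF i] ident_apply[OF i] sym_apply[OF i] using False i
      by (simp add: sym_apply[OF j])
  qed
qed

lemma sym_natural:
  assumes f: "arr a b f" and g: "arr c d g"
  shows "comp (a+c) (b+d) (d+b) (tensor a b c d f g) (sym b d)
          = comp (a+c) (c+a) (d+b) (sym a c) (tensor c d a b g f)"
proof (rule extensionalityI[OF comp_extensional comp_extensional])
  fix i assume i: "i \<in> {1..a+c}"
  show "comp (a+c) (b+d) (d+b) (tensor a b c d f g) (sym b d) i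
          = comp (a+c) (c+a) (d+b) (sym a c) (tensor c d a b g f) i"
  proof (cases "i \<le> a")
    case True
    hence i': "i \<in> {1..a}" using i by simp
    have ci: "c + i \<in> {1..c+a}" "\<not> c + i \<le> c" "c + i - c = i" using i' by auto
    have R: "comp (a+c) (c+a) (d+b) (sym a c) (tensor c d a b g f) i = shift d (f i)"
      unfolding comp_apply[OF i] sym_apply[OF i] using True i' by (simp add: tensor_apply[OF ci(1)] ci)
    show ?thesis
    proof (cases "has_idx (f i)")
      case True
      have j: "idx (f i) \<in> {1..b+d}" "idx (f i) \<le> b" using arr_idx[OF f i' True] by auto
      show ?thesis unfolding R unfolding comp_apply[OF i] tensor_apply[OF i] using \<open>i \<le> a\<close>
        by (simp add: sym_apply[OF j(1)] j(2) vcomp_Idx_shift[OF True])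
    next
      case False
      then show ?thesis unfolding R unfolding comp_apply[OF i] tensor_apply[OF i] using \<open>i \<le> a\<close>
        by (cases "f i") auto
    qed
  next
    case False
    hence i': "i - a \<in> {1..c}" using i by auto
    hence ci: "i - a \<in> {1..c+a}" "i - a \<le> c" by auto
    have R: "comp (a+c) (c+a) (d+b) (sym a c) (tensor c d a b g f) i = g (i - a)"
      unfolding comp_apply[OF i] sym_apply[OF i] using False by (simp add: tensor_apply[OF ci(1)] ci)
    show ?thesis
    proof (cases "has_idx (g (i - a))")
      case True
      have j: "idx (g (i - a)) \<in> {1..d}" using arr_idx[OF g i' True] .
      hence j2: "b + idx (g (i - a)) \<in> {1..b+d}" "\<not> b + idx (g (i - a)) \<le> b" by auto
      have e: "b + idx (g (i - a)) - b = idx (g (i - a))" by simp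
      show ?thesis unfolding R unfolding comp_apply[OF i] tensor_apply[OF i] using \<open>\<not> i \<le> a\<close>
        by (simp only: if_False idx_shift[OF True] sym_apply[OF j2(1)] j2(2) e vcomp_shift vcomp_Idx_idx[OF True])
    next
      case False
      then show ?thesis unfolding R unfolding comp_apply[OF i] tensor_apply[OF i] using \<open>\<not> i \<le> a\<close>
        by (cases "g (i - a)") auto
    qed
  qed
qed

lemma hexagon:
  "sym a (b+c) = comp (a+b+c) (b+a+c) (b+c+a) (tensor (a+b) (b+a) c c (sym a b) (ident c))
                                    (tensor b b (a+c) (c+a) (ident b) (sym a c))"
proof (rule extensionalityI[OF _ comp_extensional])
  show "sym a (b+c) \<in> extensional {1..a+b+c}" using sym_extensional[of a "b+c"] by (simp add: add.assoc)
  fix i assume i: "i \<in> {1..a+b+c}"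
  have i0: "i \<in> {1..a+(b+c)}" using i by simp
  show "sym a (b+c) i = comp (a+b+c) (b+a+c) (b+c+a) (tensor (a+b) (b+a) c c (sym a b) (ident c))
                                    (tensor b b (a+c) (c+a) (ident b) (sym a c)) i"
  proof (cases "i \<le> a")
    case True
    have i1: "i \<in> {1..a+b}" using i True by auto
    have j: "b + i \<in> {1..b+(a+c)}" "\<not> b + i \<le> b" "i \<in> {1..a+c}" "i \<le> a" using i True by auto
    show ?thesis unfolding comp_apply[OF i] sym_apply[OF i0] tensor_apply[OF i] sym_apply[OF i1]
      using True i1 by (simp add: tensor_apply[OF j(1)] j(2) sym_apply[OF j(3)] j(4))
  next
    case False
    show ?thesis
    proof (cases "i \<le> a + b")
      case True
      have i1: "i \<in> {1..a+b}" using i True by auto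
      have j: "i - a \<in> {1..b+(a+c)}" "i - a \<le> b" "i - a \<in> {1..b}" using i True False by auto
      show ?thesis unfolding comp_apply[OF i] sym_apply[OF i0] tensor_apply[OF i] sym_apply[OF i1]
        using True False by (simp add: tensor_apply[OF j(1)] j(2) ident_apply[OF j(3)])
    next
      case False2: False
      have k: "i - (a + b) \<in> {1..c}" using i False2 by auto
      have j: "i \<in> {1..b+(a+c)}" "\<not> i \<le> b" "i - b \<in> {1..a+c}" "\<not> i - b \<le> a" using i False2 by auto
      have e1: "b + a + (i - (a + b)) = i" using False2 by simp
      have e2: "b + (i - b - a) = i - a" using False2 by simp
      show ?thesis unfolding comp_apply[OF i] sym_apply[OF i0] tensor_apply[OF i]
        using False False2 by (simp add: ident_apply[OF k] e1 tensor_apply[OF j(1)] j(2) sym_apply[OF j(3)] j(4) e2)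
    qed
  qed
qed

lemma symmetric_monoidal: "is_symmetric_monoidal arr comp ident tensor sym"
  unfolding is_symmetric_monoidal_def
  by (simp add: strict_monoidal arr_sym sym_inv sym_natural hexagon)

section \<open>The trace\<close>

inductive reaches :: "nat \<Rightarrow> (nat \<Rightarrow> tval) \<Rightarrow> nat \<Rightarrow> nat \<Rightarrow> bool" for l F where
  start: "reaches l F u u"
| link: "cont l (F u) \<Longrightarrow> reaches l F (idx (F u)) v \<Longrightarrow> reaches l F u v"

lemma reaches_loop: "reaches l F u v \<Longrightarrow> v = u \<or> v \<in> {1..l}"
  by (induction rule: reaches.induct) (auto dest: cont_idx)

lemma reaches_last_step:
  "reaches l F u v \<Longrightarrow> v \<noteq> u \<Longrightarrow> \<exists>w. reaches l F u w \<and> cont l (F w) \<and> idx (F w) = v"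
proof (induction rule: reaches.induct)
  case (link u v)
  then show ?case by (cases "v = idx (F u)") (auto intro: reaches.intros)
qed simp

lemma reaches_exit:
  "has_idx (resolve l F x) \<Longrightarrow> x = F u \<Longrightarrow>
    \<exists>w. reaches l F u w \<and> \<not> cont l (F w) \<and> has_idx (F w) \<and> idx (F w) = idx (resolve l F x)"
proof (induction x arbitrary: u rule: resolve_induct[where l = l and F = F])
  case (exit x)
  then show ?case using reaches.start resolve_exit by metis
next
  case (step x)
  have x: "has_idx x" using cont_has_idx[OF step(1)] .
  then have "has_idx (resolve l F (F (idx x)))" "idx (resolve l F x) = idx (resolve l F (F (idx x)))"
    using step.prems(1) resolve_step[OF step(1)] by (simp_all add: has_idx_vcomp idx_vcomp)
  then show ?case using step.IH[OF _ refl] step(1) step.prems(2) by (metis reaches.link)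
qed (simp add: resolve_diverge split: if_splits)

text \<open>Realizability of \<open>f\<close> lets us walk the unweighted chain behind \<open>resolve l f x = Idx e\<close>
  backwards, and uniquely, from \<open>e\<close>.\<close>
lemma reaches_if_resolve_Idx:
  assumes f: "arr m n f" and l: "l \<le> m"
  shows "resolve l f x = Idx e \<Longrightarrow> x = f u \<Longrightarrow> u \<in> {1..m} \<Longrightarrow> v \<in> {1..m} \<Longrightarrow>
    has_idx (resolve l f (f v)) \<Longrightarrow> idx (resolve l f (f v)) = e \<Longrightarrow>
    reaches l f u v \<or> reaches l f v u"
proof (induction x arbitrary: u rule: resolve_induct[where l = l and F = f])
  case (exit x)
  obtain w where w: "reaches l f v w" "has_idx (f w)" "idx (f w) = e"
    using reaches_exit[OF exit.prems(5) refl] exit.prems(6) by blast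
  have "w \<in> {1..m}" using reaches_loop[OF w(1)] exit.prems(4) l by auto
  then have "u = w" using arr_realizable[OF f exit.prems(3) _ _ w(2,3)] exit resolve_exit by metis
  then show ?case using w(1) by blast
next
  case (step x)
  let ?y = "idx x"
  have plain: "x = Idx ?y" "resolve l f (f ?y) = Idx e"
    using vcomp_eq_IdxD step.prems(1) resolve_step[OF step(1)] by metis+
  have y: "?y \<in> {1..m}" using cont_idx[OF step(1)] l by auto
  have u: "reaches l f u ?y" using step(1) step.prems(2) by (metis reaches.start reaches.link)
  consider "reaches l f ?y v" | "reaches l f v ?y"
    using step.IH[OF plain(2) refl y step.prems(4-6)] by blast
  then show ?case
  proof cases
    case 1
    then show ?thesis using step(1) step.prems(2) by (metis reaches.link)
  next
    case 2
    show ?thesis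
    proof (cases "?y = v")
      case False
      then obtain w where w: "reaches l f v w" "cont l (f w)" "idx (f w) = ?y"
        using reaches_last_step[OF 2] by metis
      have "w \<in> {1..m}" using reaches_loop[OF w(1)] step.prems(4) l by auto
      then have "u = w"
        using arr_realizable[OF f step.prems(3)] plain(1) step.prems(2) w(2,3) cont_has_idx by metis
      then show ?thesis using w(1) by blast
    qed (use u in blast)
  qed
qed (simp add: resolve_diverge split: if_splits)

lemma arr_tr:
  assumes f: "arr (l+a) (l+b) f"
  shows "arr a b (tr l a b f)"
proof (rule arrI[OF _ _ tr_extensional])
  have res: "inT (l+b) (resolve l f (f (l+i)))" if "i \<in> {1..a}" for i
    using that by (intro inT_resolve) (auto intro: arr_inT[OF f])
  fix i assume i: "i \<in> {1..a}"
  show "inT b (tr l a b f i)"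
    unfolding tr_apply[OF f i] using inT_unshift[OF res[OF i] not_cont_resolve] .
next
  have res: "resolve l f (f (l+i)) = shift l (tr l a b f i)" if "i \<in> {1..a}" for i
    unfolding tr_apply[OF f that]
    using that by (intro shift_unshift[symmetric] inT_resolve not_cont_resolve) (auto intro: arr_inT[OF f])
  fix i j k assume i: "i \<in> {1..a}" and j: "j \<in> {1..a}" and e: "tr l a b f i = Idx k"
    and x: "has_idx (tr l a b f j)" and y: "idx (tr l a b f j) = k"
  have "reaches l f (l+i) (l+j) \<or> reaches l f (l+j) (l+i)"
    using reaches_if_resolve_Idx[OF f _ _ refl] res[OF i] res[OF j] e x y i j
    by (simp add: idx_shift)
  then show "i = j" using reaches_loop i j by fastforce
qed

lemma orbit_transport:
  assumes agree: "\<forall>y\<in>{1..l}. F y = post (G y)" and post_cont: "\<forall>z. cont l z \<longrightarrow> post z = z"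
    and ne: "\<not> exits l G x"
  shows "orbit F (post x) t = orbit G x t"
proof (induction t)
  case 0 then show ?case using post_cont cont_orbit_if_not_exits[OF ne, of 0] by simp
next
  case (Suc t)
  have c: "cont l (orbit G x t)" "cont l (orbit G x (Suc t))"
    using cont_orbit_if_not_exits[OF ne] by blast+
  then show ?case using Suc agree post_cont cont_idx[OF c(1)] by simp
qed

lemma resolve_transport:
  assumes agree: "\<forall>y\<in>{1..l}. F y = post (G y)" and dom: "\<forall>y\<in>{1..l}. inT N (G y)"
    and post_cont: "\<forall>z. cont l z \<longrightarrow> post z = z"
    and post_exit: "\<forall>z. inT N z \<longrightarrow> \<not> cont l z \<longrightarrow> \<not> cont l (post z)"
    and post_vcomp: "\<forall>z y. has_idx z \<longrightarrow> post (vcomp z y) = vcomp z (post y)"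
    and post_ExS: "post ExS = ExS" and post_AllS: "post AllS = AllS"
  shows "inT N x \<Longrightarrow> resolve l F (post x) = post (resolve l G x)"
proof (induction x rule: resolve_induct[where l = l and F = G])
  case (exit x)
  then show ?case using resolve_exit[OF exit(1)] resolve_exit[of l "post x" F] post_exit by simp
next
  case (step x)
  have y: "idx x \<in> {1..l}" using cont_idx[OF step(1)] .
  have "resolve l F (post x) = vcomp x (resolve l F (F (idx x)))"
    using post_cont step(1) resolve_step by metis
  also have "\<dots> = vcomp x (post (resolve l G (G (idx x))))" using step.IH dom agree y by simp
  also have "\<dots> = post (resolve l G x)"
    using post_vcomp cont_has_idx[OF step(1)] resolve_step[OF step(1)] by simp
  finally show ?case .
next
  case (diverge x)
  have "orbit F (post x) = orbit G x" using orbit_transport[OF agree post_cont diverge(1)] by blast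
  then have "resolve l F (post x) = resolve l G x"
    unfolding resolve_def exits_def exit_time_def weight_bdd_below_def orbit_weight_def by simp
  then show ?case using resolve_diverge[OF diverge(1)] post_ExS post_AllS by simp
qed

lemma trace_vanish_0: "arr a b f \<Longrightarrow> tr 0 a b f = f"
  by (rule extensionalityI[OF tr_extensional arr_extensional])
    (use tr_apply[of 0 a b f] in \<open>auto simp: resolve_exit not_cont_0\<close>)

lemma trace_yank: "tr l l l (sym l l) = ident l"
proof (rule extensionalityI[OF tr_extensional ident_extensional])
  fix i assume i: "i \<in> {1..l}"
  have "sym l l (l+i) = Idx i" "sym l l i = Idx (l+i)" using i by (simp_all add: sym_apply)
  then have "resolve l (sym l l) (sym l l (l+i)) = Idx (l+i)"
    using i resolve_step[of l "Idx i" "sym l l"] resolve_exit[of l "Idx (l+i)"] by simp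
  then show "tr l l l (sym l l) i = ident l i" using tr_apply[OF arr_sym i] i ident_apply by simp
qed

lemma trace_superpose:
  assumes f: "arr (l+a) (l+b) f" and g: "arr c d g"
  shows "tr l (a+c) (b+d) (tensor (l+a) (l+b) c d f g) = tensor a b c d (tr l a b f) g"
proof (rule extensionalityI[OF tr_extensional tensor_extensional])
  let ?T = "tensor (l+a) (l+b) c d f g"
  have T: "arr (l+(a+c)) (l+(b+d)) ?T" using arr_tensor[OF f g] by (simp add: add.assoc)
  fix i assume i: "i \<in> {1..a+c}"
  have li: "l + i \<in> {1..l+a+c}" using i by auto
  show "tr l (a+c) (b+d) ?T i = tensor a b c d (tr l a b f) g i"
  proof (cases "i \<le> a")
    case True
    have "resolve l ?T (id (f (l+i))) = id (resolve l f (f (l+i)))"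
      using True i by (intro resolve_transport[where N = "l+b"]) (auto simp: tensor_apply arr_inT[OF f])
    then show ?thesis using True i tr_apply[OF T i] tr_apply[OF f] tensor_apply[OF li] by (simp add: tensor_apply)
  next
    case False
    then have "inT d (g (i - a))" using i by (intro arr_inT[OF g]) auto
    then show ?thesis using False i tr_apply[OF T i] tensor_apply[OF li]
      by (simp add: tensor_apply resolve_exit not_cont_shift unshift_shift_add)
  qed
qed

subsection \<open>Tightening\<close>

lemma tr_comp_tensor_left:
  assumes g: "arr a' a g" and f: "arr (l+a) (l+b) f"
  shows "tr l a' b (comp (l+a') (l+a) (l+b) (tensor l l a' a (ident l) g) f)
       = comp a' a b g (tr l a b f)"
proof (rule extensionalityI[OF tr_extensional comp_extensional])
  let ?G = "tensor l l a' a (ident l) g"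
  let ?F = "comp (l+a') (l+a) (l+b) ?G f"
  have F: "arr (l+a') (l+b) ?F" using arr_comp[OF arr_tensor[OF arr_ident g] f] .
  fix i assume i: "i \<in> {1..a'}"
  have Fi: "?F (l+i) = vcomp (shift l (g i)) (f (l + idx (g i)))" if "has_idx (g i)"
    using i that by (simp add: comp_apply tensor_apply idx_shift)
  show "tr l a' b ?F i = comp a' a b g (tr l a b f) i"
  proof (cases "has_idx (g i)")
    case True
    have j: "idx (g i) \<in> {1..a}" using arr_idx[OF g i True] .
    have "resolve l ?F (id (f (l + idx (g i)))) = id (resolve l f (f (l + idx (g i))))"
      using j by (intro resolve_transport[where N = "l+b"])
        (auto simp: comp_apply tensor_apply ident_apply arr_inT[OF f])
    then show ?thesis
      using True i j tr_apply[OF F i] tr_apply[OF f j] Fi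
      by (simp add: comp_apply resolve_vcomp unshift_vcomp vcomp_shift)
  next
    case False
    then have "?F (l+i) = g i" using i by (cases "g i") (simp_all add: comp_apply tensor_apply)
    then show ?thesis using False i tr_apply[OF F i] by (cases "g i") (simp_all add: comp_apply resolve_exit)
  qed
qed

lemma tr_comp_tensor_right:
  assumes f: "arr (l+a) (l+b) f" and h: "arr b b' h"
  shows "tr l a b' (comp (l+a) (l+b) (l+b') f (tensor l l b b' (ident l) h))
       = comp a b b' (tr l a b f) h"
proof (rule extensionalityI[OF tr_extensional comp_extensional])
  let ?H = "tensor l l b b' (ident l) h"
  let ?F = "comp (l+a) (l+b) (l+b') f ?H"
  define post where "post z = vcomp z (?H (idx z))" for z
  have F: "arr (l+a) (l+b') ?F" using arr_comp[OF f arr_tensor[OF arr_ident h]] .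
  have H_loop: "?H y = Idx y" if "y \<in> {1..l}" for y using that by (simp add: tensor_apply ident_apply)
  have post_exit: "unshift l (post z) = vcomp (unshift l z) (h (idx (unshift l z)))
      \<and> \<not> cont l (post z)" if "inT (l+b) z" "\<not> cont l z" for z
  proof (cases "has_idx z")
    case True
    then have "idx z - l \<in> {1..b}" using that inT_not_cont_idx[OF that(1) True] by (cases z) auto
    then have "inT b' (h (idx z - l))" using arr_inT[OF h] by blast
    then show ?thesis using True that inT_not_cont_idx[OF that(1) True]
      by (cases z; cases "h (idx z - l)") (auto simp: post_def tensor_apply)
  qed (use that in \<open>cases z; simp add: post_def\<close>)
  have transport: "resolve l ?F (post x) = post (resolve l f x)" if "inT (l+b) x" for x
  proof (rule resolve_transport[OF _ _ _ _ _ _ _ that])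
    show "\<forall>y\<in>{1..l}. ?F y = post (f y)" by (simp add: post_def comp_apply)
    show "\<forall>z. cont l z \<longrightarrow> post z = z" using H_loop cont_idx vcomp_Idx_idx cont_has_idx post_def by metis
    show "\<forall>z y. has_idx z \<longrightarrow> post (vcomp z y) = vcomp z (post y)"
      by (simp add: post_def idx_vcomp vcomp_assoc)
  qed (use post_exit arr_inT[OF f] in \<open>auto simp: post_def\<close>)
  fix i assume i: "i \<in> {1..a}"
  have x: "inT (l+b) (f (l+i))" using arr_inT[OF f] i by simp
  have R: "inT (l+b) (resolve l f (f (l+i)))" "\<not> cont l (resolve l f (f (l+i)))"
    using inT_resolve[OF _ x] arr_inT[OF f] not_cont_resolve by auto
  show "tr l a b' ?F i = comp a b b' (tr l a b f) h i"
    using tr_apply[OF F i] tr_apply[OF f i] transport[OF x] post_exit[OF R] i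
    by (simp add: comp_apply post_def)
qed

lemma trace_tighten:
  assumes g: "arr a' a g" and f: "arr (l+a) (l+b) f" and h: "arr b b' h"
  shows "tr l a' b' (comp (l+a') (l+b) (l+b')
                       (comp (l+a') (l+a) (l+b) (tensor l l a' a (ident l) g) f)
                       (tensor l l b b' (ident l) h))
          = comp a' b b' (comp a' a b g (tr l a b f)) h"
proof -
  have G: "arr (l+a') (l+a) (tensor l l a' a (ident l) g)" using arr_tensor[OF arr_ident g] .
  have H: "arr (l+b) (l+b') (tensor l l b b' (ident l) h)" using arr_tensor[OF arr_ident h] .
  have fh: "arr (l+a) (l+b') (comp (l+a) (l+b) (l+b') f (tensor l l b b' (ident l) h))"
    using arr_comp[OF f H] .
  show ?thesis
    unfolding comp_assoc[OF G f H] tr_comp_tensor_left[OF g fh] tr_comp_tensor_right[OF f h]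
    by (rule comp_assoc[OF g arr_tr[OF f] h, symmetric])
qed

subsection \<open>Sliding\<close>

lemma bdd_below_perturb:
  fixes A G :: "nat \<Rightarrow> real"
  assumes "\<And>N. \<bar>A N - G N\<bar> \<le> M"
  shows "(\<exists>B. \<forall>N. B \<le> A N) \<longleftrightarrow> (\<exists>B. \<forall>N. B \<le> G N)"
proof
  assume "\<exists>B. \<forall>N. B \<le> A N"
  then obtain B where B: "\<And>N. B \<le> A N" by blast
  have "B - M \<le> G N" for N using B[of N] assms[of N] unfolding abs_le_iff by linarith
  then show "\<exists>B. \<forall>N. B \<le> G N" by blast
next
  assume "\<exists>B. \<forall>N. B \<le> G N"
  then obtain B where B: "\<And>N. B \<le> G N" by blast
  have "B - M \<le> A N" for N using B[of N] assms[of N] unfolding abs_le_iff by linarith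
  then show "\<exists>B. \<forall>N. B \<le> A N" by blast
qed

lemma weight_bdd_below_perturb:
  assumes "\<And>J. orbit_weight G y (Suc J) = orbit_weight F x J + c J" and "\<And>J. \<bar>c J\<bar> \<le> M"
  shows "weight_bdd_below F x \<longleftrightarrow> weight_bdd_below G y"
proof -
  have "(\<exists>B. \<forall>J. B \<le> orbit_weight G y (Suc J)) \<longleftrightarrow> weight_bdd_below F x"
    unfolding weight_bdd_below_def assms(1) by (intro bdd_below_perturb[where M = M]) (simp add: assms(2))
  moreover have "(\<exists>B. \<forall>J. B \<le> orbit_weight G y (Suc J)) \<longleftrightarrow> weight_bdd_below G y"
    unfolding weight_bdd_below_def by (rule bdd_below_Suc_iff[where c = 0, symmetric]) simp_all
  ultimately show ?thesis by simp
qed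

text \<open>Feedback through \<open>F\<^sub>1 = f ; k\<close> on \<open>[l]\<close> and through \<open>F\<^sub>2 = k ; f\<close> on \<open>[l']\<close>
  run through the same alternating sequence of \<open>f\<close>- and \<open>k\<close>-steps, shifted by half a
  round; so their partial weight sums differ by a single, bounded, \<open>f\<close>-weight.\<close>
lemma interleaved_orbits:
  assumes F1: "\<And>x. x \<in> {1..l} \<Longrightarrow> F1 x = P (f x)"
    and F2: "\<And>y. y \<in> {1..l'} \<Longrightarrow> F2 y = vcomp (k y) (f (idx (k y)))"
    and P: "\<And>z. cont l' z \<Longrightarrow> P z = vcomp z (k (idx z))"
    and k: "\<And>y. y \<in> {1..l'} \<Longrightarrow> inT l (k y)"
    and ne: "\<not> exits l' F2 w"
  shows "\<not> exits l F1 (P w) \<and> (weight_bdd_below F1 (P w) \<longleftrightarrow> weight_bdd_below F2 w)"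
proof -
  let ?q = "orbit F2 w"
  have cq: "cont l' (?q t)" for t using cont_orbit_if_not_exits[OF ne] .
  define \<kappa> where "\<kappa> t = k (idx (?q t))" for t
  define \<phi> where "\<phi> t = (if t = 0 then w else f (idx (\<kappa> (t - 1))))" for t
  have q_Suc: "?q (Suc t) = vcomp (\<kappa> t) (\<phi> (Suc t))" for t
    unfolding \<kappa>_def \<phi>_def using F2 cont_idx[OF cq] by simp
  have \<kappa>: "has_idx (\<kappa> t)" "idx (\<kappa> t) \<in> {1..l}" for t
    using q_Suc[of t] cont_has_idx[OF cq[of "Suc t"]] has_idx_vcompD k cont_idx[OF cq[of t]]
    unfolding \<kappa>_def by (metis inT_iff)+
  have \<phi>: "cont l' (\<phi> t) \<and> idx (\<phi> t) = idx (?q t)" for t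
    using cq[of t] q_Suc[of "t - 1"] \<kappa>(1)[of "t - 1"]
    by (cases t) (simp_all add: \<phi>_def cont_vcomp idx_vcomp)
  have p1: "orbit F1 (P w) t = vcomp (\<phi> t) (\<kappa> t)" for t
  proof (induction t)
    case 0 then show ?case using P cq[of 0] by (simp add: \<phi>_def \<kappa>_def)
  next
    case (Suc t)
    have "idx (vcomp (\<phi> t) (\<kappa> t)) = idx (\<kappa> t)" using idx_vcomp cont_has_idx \<phi> by blast
    then have "orbit F1 (P w) (Suc t) = F1 (idx (\<kappa> t))" using Suc.IH by simp
    also have "\<dots> = P (\<phi> (Suc t))" using F1 \<kappa>(2) by (simp add: \<phi>_def)
    finally have "orbit F1 (P w) (Suc t) = P (\<phi> (Suc t))" .
    then show ?case using P \<phi>[of "Suc t"] by (simp add: \<kappa>_def)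
  qed
  have "cont l (orbit F1 (P w) t)" for t
    unfolding p1 using cont_vcomp cont_has_idx \<phi> \<kappa> cont_iff by metis
  then have ne1: "\<not> exits l F1 (P w)" unfolding exits_def by blast
  have tele: "orbit_weight F2 w (Suc J) = orbit_weight F1 (P w) J + wt (\<phi> J)" for J
  proof (induction J)
    case (Suc J)
    have "wt (?q (Suc J)) = wt (\<kappa> J) + wt (\<phi> (Suc J))" "wt (orbit F1 (P w) J) = wt (\<phi> J) + wt (\<kappa> J)"
      using q_Suc p1 wt_vcomp \<kappa>(1) \<phi> cont_has_idx by metis+
    then show ?case using Suc by (simp add: orbit_weight_def)
  qed (simp add: orbit_weight_def \<phi>_def)
  define M where "M = max \<bar>wt w\<bar> (Max ((\<lambda>x. \<bar>wt (f x)\<bar>) ` {1..l}))"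
  have "\<bar>wt (f x)\<bar> \<le> Max ((\<lambda>x. \<bar>wt (f x)\<bar>) ` {1..l})" if "x \<in> {1..l}" for x
    using that by (intro Max_ge) auto
  then have "\<bar>wt (\<phi> J)\<bar> \<le> M" for J
    using \<kappa>(2)[of "J - 1"] by (cases J) (auto simp: M_def \<phi>_def le_max_iff_disj)
  then show ?thesis using ne1 weight_bdd_below_perturb[OF tele] by blast
qed

lemma resolve_slide:
  assumes F1: "\<And>x. x \<in> {1..l} \<Longrightarrow> F1 x = P (f x)"
    and F2: "\<And>y. y \<in> {1..l'} \<Longrightarrow> F2 y = vcomp (k y) (f (idx (k y)))"
    and P_loop: "\<And>z. cont l' z \<Longrightarrow> P z = vcomp z (k (idx z))"
    and P_exit: "\<And>z. inT (l'+b) z \<Longrightarrow> \<not> cont l' z \<Longrightarrow> \<not> cont l (P z) \<and> unshift l (P z) = unshift l' z"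
    and P_vcomp: "\<And>z u. has_idx z \<Longrightarrow> P (vcomp z u) = vcomp z (P u)"
    and k: "\<And>y. y \<in> {1..l'} \<Longrightarrow> inT l (k y)"
    and F2_dom: "\<And>y. y \<in> {1..l'} \<Longrightarrow> inT (l'+b) (F2 y)"
  shows "inT (l'+b) w \<Longrightarrow> unshift l (resolve l F1 (P w)) = unshift l' (resolve l' F2 w)"
proof (induction w rule: resolve_induct[where l = l' and F = F2])
  case (exit w)
  then show ?case using P_exit resolve_exit by metis
next
  case (step w)
  let ?y = "idx w"
  have y: "?y \<in> {1..l'}" and w: "has_idx w" using cont_idx cont_has_idx step(1) by blast+
  have IH: "unshift l (resolve l F1 (P (F2 ?y))) = unshift l' (resolve l' F2 (F2 ?y))"
    using step.IH F2_dom[OF y] by blast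
  have R: "unshift l' (resolve l' F2 w) = vcomp w (unshift l' (resolve l' F2 (F2 ?y)))"
    using resolve_step[OF step(1)] unshift_vcomp[OF w] by simp
  have Pw: "P w = vcomp w (k ?y)" using P_loop[OF step(1)] .
  show ?case
  proof (cases "has_idx (k ?y)")
    case True
    have x: "idx (k ?y) \<in> {1..l}" using k[OF y] True inT_iff by blast
    have "cont l (P w)" unfolding Pw using cont_vcomp[OF w] True x cont_iff by blast
    then have "resolve l F1 (P w) = vcomp w (vcomp (k ?y) (resolve l F1 (P (f (idx (k ?y))))))"
      using resolve_step F1[OF x] Pw idx_vcomp[OF w] vcomp_assoc by metis
    also have "\<dots> = vcomp w (resolve l F1 (P (F2 ?y)))"
      using F2[OF y] P_vcomp[OF True] resolve_vcomp[OF True] by simp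
    finally show ?thesis using R IH unshift_vcomp[OF w] by simp
  next
    case False
    then have "P w = k ?y" "F2 ?y = k ?y" using Pw w F2[OF y] by (cases "k ?y"; cases w; simp)+
    then show ?thesis using R False w resolve_exit[of l "k ?y"] resolve_exit[of l' "k ?y"]
      by (cases "k ?y"; cases w) auto
  qed
next
  case (diverge w)
  have "\<not> exits l F1 (P w)" and "weight_bdd_below F1 (P w) \<longleftrightarrow> weight_bdd_below F2 w"
    using interleaved_orbits[OF F1 F2 P_loop k diverge(1)] by blast+
  then show ?case using resolve_diverge[OF diverge(1)] resolve_diverge[of l F1 "P w"] by simp
qed

lemma trace_slide:
  assumes f: "arr (l+a) (l'+b) f" and k: "arr l' l k"
  shows "tr l a b (comp (l+a) (l'+b) (l+b) f (tensor l' l b b k (ident b)))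
       = tr l' a b (comp (l'+a) (l+a) (l'+b) (tensor l' l a a k (ident a)) f)"
proof (rule extensionalityI[OF tr_extensional tr_extensional])
  let ?K1 = "tensor l' l b b k (ident b)" and ?K2 = "tensor l' l a a k (ident a)"
  let ?F1 = "comp (l+a) (l'+b) (l+b) f ?K1" and ?F2 = "comp (l'+a) (l+a) (l'+b) ?K2 f"
  define P where "P z = vcomp z (?K1 (idx z))" for z
  have F1: "arr (l+a) (l+b) ?F1" using arr_comp[OF f arr_tensor[OF k arr_ident]] .
  have F2: "arr (l'+a) (l'+b) ?F2" using arr_comp[OF arr_tensor[OF k arr_ident] f] .
  have F1_apply: "?F1 x = P (f x)" if "x \<in> {1..l+a}" for x using that by (simp add: comp_apply P_def)
  have P_exit: "\<not> cont l (P z) \<and> unshift l (P z) = unshift l' z"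
    if "inT (l'+b) z" "\<not> cont l' z" for z
  proof (cases "has_idx z")
    case True
    then have "idx z - l' \<in> {1..b}" using that by (cases z) auto
    then show ?thesis using True that inT_not_cont_idx[OF that(1) True]
      by (cases z) (auto simp: P_def tensor_apply ident_apply)
  qed (use that in \<open>cases z; simp add: P_def\<close>)
  fix i assume i: "i \<in> {1..a}"
  have "?F2 (l'+i) = f (l+i)" using i by (simp add: comp_apply tensor_apply ident_apply)
  moreover have "unshift l (resolve l ?F1 (P w)) = unshift l' (resolve l' ?F2 w)" if "inT (l'+b) w" for w
  proof (rule resolve_slide[OF _ _ _ P_exit _ _ _ that])
    show "?F1 x = P (f x)" if "x \<in> {1..l}" for x using F1_apply that by simp
    show "?F2 y = vcomp (k y) (f (idx (k y)))" if "y \<in> {1..l'}" for y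
      using that by (simp add: comp_apply tensor_apply)
    show "P z = vcomp z (k (idx z))" if "cont l' z" for z
      using cont_idx[OF that] by (simp add: P_def tensor_apply)
    show "P (vcomp z u) = vcomp z (P u)" if "has_idx z" for z u
      using that by (simp add: P_def idx_vcomp vcomp_assoc)
  qed (use arr_inT[OF k] arr_inT[OF F2] in auto)
  ultimately show "tr l a b ?F1 i = tr l' a b ?F2 i"
    using tr_apply[OF F1 i] tr_apply[OF F2 i] F1_apply[of "l+i"] arr_inT[OF f, of "l+i"] i by simp
qed

subsection \<open>Vanishing\<close>

lemma resolve_block:
  assumes r: "has_idx (resolve l F x)"
  defines "K \<equiv> exit_time l F x"
  shows "exits l F x" "has_idx (orbit F x K)" "idx (orbit F x K) = idx (resolve l F x)"
    "wt (resolve l F x) = orbit_weight F x (Suc K)"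
proof -
  show e: "exits l F x" using exits_if_has_idx_resolve[OF r] .
  have before: "\<forall>j<K. has_idx (orbit F x j)"
    unfolding K_def using cont_before_exit_time cont_has_idx by blast
  have res: "resolve l F x = vcomp_upto (orbit F x) K" unfolding resolve_def K_def using e by simp
  then show "has_idx (orbit F x K)" using r vcomp_upto_has_idx_iff[OF before] by simp
  then show "idx (orbit F x K) = idx (resolve l F x)" "wt (resolve l F x) = orbit_weight F x (Suc K)"
    unfolding res orbit_weight_def using vcomp_upto_has_idx[OF before] by (simp_all add: lessThan_Suc_atMost)
qed

lemma resolve_add_if_not_exits:
  assumes ne: "\<not> exits l F x"
  shows "resolve (l + l') F x = resolve l F x"
proof -
  have "\<not> exits (l + l') F x" using cont_orbit_if_not_exits[OF ne] cont_add unfolding exits_def by blast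
  then show ?thesis using resolve_diverge ne by simp
qed

lemma resolve_add_if_exits: "exits l F x \<Longrightarrow> resolve (l + l') F x = resolve (l + l') F (resolve l F x)"
proof (induction x rule: resolve_induct[where l = l and F = F])
  case (step x)
  have "resolve (l + l') F x = vcomp x (resolve (l + l') F (F (idx x)))"
    using resolve_step[OF cont_add[OF step(1)]] .
  also have "\<dots> = vcomp x (resolve (l + l') F (resolve l F (F (idx x))))"
    using step exits_step[OF step(1)] by simp
  also have "\<dots> = resolve (l + l') F (resolve l F x)"
    using resolve_vcomp[OF cont_has_idx[OF step(1)]] resolve_step[OF step(1)] by simp
  finally show ?case .
qed (simp_all add: resolve_exit)

primrec block_end :: "nat \<Rightarrow> (nat \<Rightarrow> tval) \<Rightarrow> tval \<Rightarrow> nat \<Rightarrow> nat" where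
  "block_end l F z 0 = 0"
| "block_end l F z (Suc J) =
     Suc (block_end l F z J) + exit_time l F (orbit F z (Suc (block_end l F z J)))"

lemma block_end_ge: "J \<le> block_end l F z J"
  by (induction J) auto

context
  fixes l l' a b :: nat and f :: "nat \<Rightarrow> tval"
  assumes f: "arr (l+(l'+a)) (l+(l'+b)) f"
begin

abbreviation inner :: "nat \<Rightarrow> tval" where
  "inner \<equiv> tr l (l'+a) (l'+b) f"

lemma inner_apply: "x \<in> {1..l'+a} \<Longrightarrow> inner x = unshift l (resolve l f (f (l + x)))"
  using tr_apply[OF f] .

lemma inT_resolve_entry: "x \<in> {1..l+(l'+a)} \<Longrightarrow> inT (l+(l'+b)) (resolve l f (f x))"
  by (intro inT_resolve) (auto intro: arr_inT[OF f])

text \<open>Each step of the orbit of \<open>y\<close> under the inner trace is a block of steps of the orbit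
  of \<open>shift l y\<close> under \<open>f\<close>: it ends at the same index and has the same total weight.\<close>
lemma block_invariant:
  assumes ne: "\<not> exits l' inner y"
  defines "z \<equiv> shift l y" and "\<beta> \<equiv> block_end l f (shift l y)"
  shows "idx (orbit f z (\<beta> J)) = l + idx (orbit inner y J)
    \<and> orbit_weight inner y (Suc J) = orbit_weight f z (Suc (\<beta> J))
    \<and> (\<forall>t\<le>\<beta> J. cont (l+l') (orbit f z t))"
proof (induction J)
  case 0
  have "has_idx y" "idx y \<in> {1..l'}" using cont_orbit_if_not_exits[OF ne, of 0] cont_has_idx cont_idx by auto
  then show ?case by (simp add: z_def \<beta>_def idx_shift orbit_weight_def cont_iff)
next
  case (Suc J)
  let ?x = "idx (orbit inner y J)" and ?w = "orbit f z (Suc (\<beta> J))"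
  define K where "K = exit_time l f ?w"
  have x: "?x \<in> {1..l'}" using cont_idx cont_orbit_if_not_exits[OF ne] by blast
  have w: "?w = f (l + ?x)" using Suc.IH by simp
  have y_Suc: "orbit inner y (Suc J) = unshift l (resolve l f ?w)" using inner_apply x w by simp
  have c: "cont l' (orbit inner y (Suc J))" using cont_orbit_if_not_exits[OF ne] .
  then have r: "has_idx (resolve l f ?w)" using y_Suc cont_has_idx has_idx_unshift by metis
  have orbit_w: "orbit f z (Suc (\<beta> J) + j) = orbit f ?w j" for j by (rule orbit_add)
  have \<beta>: "\<beta> (Suc J) = Suc (\<beta> J) + K" unfolding \<beta>_def K_def z_def by simp
  have "l < idx (resolve l f ?w)"
    using inT_not_cont_idx[OF _ r not_cont_resolve] inT_resolve_entry[of "l + ?x"] x w by simp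
  then have idx_end: "idx (orbit f z (\<beta> (Suc J))) = l + idx (orbit inner y (Suc J))"
    using resolve_block(3)[OF r] y_Suc idx_unshift[OF r] \<beta> orbit_w unfolding K_def by simp
  have "orbit_weight inner y (Suc (Suc J)) = orbit_weight f z (Suc (\<beta> J)) + wt (resolve l f ?w)"
    using Suc.IH y_Suc by (simp add: orbit_weight_def)
  also have "\<dots> = orbit_weight f z (Suc (\<beta> (Suc J)))"
    using resolve_block(4)[OF r] \<beta> orbit_weight_add[of f z "Suc (\<beta> J)" "Suc K"] unfolding K_def by simp
  finally have weight: "orbit_weight inner y (Suc (Suc J)) = orbit_weight f z (Suc (\<beta> (Suc J)))" .
  have "cont (l+l') (orbit f z t)" if "t \<le> \<beta> (Suc J)" for t
  proof -
    have "t \<le> \<beta> J \<or> (\<exists>j<K. t = Suc (\<beta> J) + j) \<or> t = \<beta> (Suc J)"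
    proof (cases "t \<le> \<beta> J \<or> t = \<beta> (Suc J)")
      case False
      then have "t - Suc (\<beta> J) < K" "t = Suc (\<beta> J) + (t - Suc (\<beta> J))" using that \<beta> by auto
      then show ?thesis by blast
    qed blast
    then show ?thesis
    proof (elim disjE exE conjE)
      fix j assume "j < K" and t: "t = Suc (\<beta> J) + j"
      then have "cont l (orbit f ?w j)" using cont_before_exit_time unfolding K_def by blast
      then show ?thesis using cont_add orbit_w[of j] t by simp
    next
      assume t: "t = \<beta> (Suc J)"
      have "has_idx (orbit f z t)" using t \<beta> orbit_w resolve_block(2)[OF r] unfolding K_def by simp
      then show ?thesis using t idx_end cont_idx[OF c] cont_iff by auto
    qed (use Suc.IH in blast)
  qed
  then show ?case using idx_end weight by blast
qed

lemma resolve_add_diverge: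
  assumes ne: "\<not> exits l' inner y"
  shows "unshift l (resolve (l+l') f (shift l y)) = resolve l' inner y"
proof -
  let ?z = "shift l y" and ?\<beta> = "block_end l f (shift l y)"
  define \<gamma> where "\<gamma> J = (case J of 0 \<Rightarrow> 0 | Suc J' \<Rightarrow> Suc (?\<beta> J'))" for J
  have cont: "\<forall>t. cont (l+l') (orbit f ?z t)"
  proof
    fix t show "cont (l+l') (orbit f ?z t)"
      using block_invariant[OF ne, of t] block_end_ge[of t] by blast
  qed
  then have ne': "\<not> exits (l+l') f ?z" unfolding exits_def by blast
  have weights: "orbit_weight inner y J = orbit_weight f ?z (\<gamma> J)" for J
  proof (cases J)
    case (Suc J')
    then show ?thesis using block_invariant[OF ne, of J'] by (simp add: \<gamma>_def)
  qed (simp add: \<gamma>_def)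
  have "\<forall>J. J \<le> \<gamma> J" using block_end_ge by (auto simp: \<gamma>_def split: nat.split)
  from weight_bdd_below_iff_cofinal[OF cont this]
  have "weight_bdd_below inner y \<longleftrightarrow> weight_bdd_below f ?z"
    unfolding weight_bdd_below_def weights by simp
  then show ?thesis using resolve_diverge[OF ne] resolve_diverge[OF ne'] by simp
qed

lemma resolve_add_entry:
  assumes x: "x \<in> {1..l'+a}"
    and hyp: "inT (l'+b) (inner x) \<Longrightarrow>
      unshift l (resolve (l+l') f (shift l (inner x))) = resolve l' inner (inner x)"
  shows "unshift l (resolve (l+l') f (f (l+x))) = resolve l' inner (inner x)"
proof (cases "exits l f (f (l+x))")
  case True
  have r: "inT (l+(l'+b)) (resolve l f (f (l+x)))" using inT_resolve_entry x by simp
  then have "resolve l f (f (l+x)) = shift l (inner x)"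
    using inner_apply[OF x] shift_unshift[OF _ not_cont_resolve] by (simp add: add.assoc)
  moreover have "inT (l'+b) (inner x)" using inner_apply[OF x] inT_unshift[OF r not_cont_resolve] by simp
  ultimately show ?thesis using resolve_add_if_exits[OF True] hyp by simp
next
  case False
  then show ?thesis using resolve_add_if_not_exits[OF False] inner_apply[OF x]
    by (simp add: resolve_diverge resolve_exit)
qed

lemma resolve_add:
  "inT (l'+b) y \<Longrightarrow> unshift l (resolve (l+l') f (shift l y)) = resolve l' inner y"
proof (induction y rule: resolve_induct[where l = l' and F = inner])
  case (exit y)
  then have "\<not> cont (l+l') (shift l y)" by (cases y) auto
  then show ?case using resolve_exit exit(1) by simp
next
  case (step y)
  let ?x = "idx y"
  have x: "?x \<in> {1..l'+a}" using cont_idx[OF step(1)] by auto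
  have y: "has_idx y" using cont_has_idx[OF step(1)] .
  have "cont (l+l') (shift l y)" using step(1) by (cases y) auto
  then have "resolve (l+l') f (shift l y) = vcomp y (resolve (l+l') f (f (l + ?x)))"
    using resolve_step y by (simp add: idx_shift vcomp_shift)
  moreover have "unshift l (resolve (l+l') f (f (l + ?x))) = resolve l' inner (inner ?x)"
    using resolve_add_entry[OF x] step.IH by blast
  ultimately show ?case using resolve_step[OF step(1)] unshift_vcomp[OF y] by simp
next
  case (diverge y)
  then show ?case using resolve_add_diverge by blast
qed

lemma trace_vanish_add: "tr (l+l') a b f = tr l' a b inner"
proof (rule extensionalityI[OF tr_extensional tr_extensional])
  fix i assume i: "i \<in> {1..a}"
  have x: "l' + i \<in> {1..l'+a}" using i by auto
  have "tr (l+l') a b f i = unshift l' (unshift l (resolve (l+l') f (f (l+(l'+i)))))"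
    using tr_apply[of "l+l'" a b f, OF _ i] f by (simp add: add.assoc unshift_add)
  also have "\<dots> = tr l' a b inner i"
    using resolve_add_entry[OF x resolve_add] tr_apply[OF arr_tr[OF f] i] by simp
  finally show "tr (l+l') a b f i = tr l' a b inner i" .
qed

end

theorem propositionD2:
  shows "is_traced_symmetric_monoidal arr comp ident tensor sym tr"
  unfolding is_traced_symmetric_monoidal_def
  using symmetric_monoidal arr_tr trace_tighten trace_slide trace_vanish_0 trace_superpose trace_yank
    trace_vanish_add by (simp add: add.assoc)

end
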